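(* For every $q\in\mathbb{K}$, the $q$-tridendriform algebra $\mathbf{ST}(q)=(\mathbf{ST},\succ_q,\cdot_q,\prec_q)$ equipped with the coproduct $\Delta$ is a $q$-tridendriform bialgebra.
   Context: Words: a map $h:[n]\to\mathbb{Z}_{>0}$ is identified with the word $(h(1),\dots,h(n))$; $\max(h)$ is its largest value; for $h$ of length $n$ and $k$ of length $m$, $hk$ is the concatenation (length $n+m$); $\cap(h,k):=|\mathrm{Im}(h)\cap\mathrm{Im}(k)|$. A word $u$ is surjective if $\mathrm{Im}(u)=[\max(u)]$. $\mathbf{ST}_n^r$ is the set of surjections $[n]\to[r]$, $\mathbf{ST}_n=\bigcup_{r=1}^n\mathbf{ST}_n^r$, $\mathbf{ST}=\bigoplus_{n\ge1}\mathbb{K}[\mathbf{ST}_n]$. The standardization $\mathrm{std}(h)$ of a word $h$ of length $n$ is the unique surjection $s$ with $h(i)<h(j)\iff s(i)<s(j)$ (so also $h(i)=h(j)\iff s(i)=s(j)$). For $f\in\mathbf{ST}_n$, $g\in\mathbf{ST}_m$: $f\succ_qg=\sum_{\max(h)<\max(k)}q^{\cap(h,k)}hk$, $f\cdot_qg=\sum_{\max(h)=\max(k)}q^{\cap(h,k)-1}hk$, $f\prec_qg=\sum_{\max(h)>\max(k)}q^{\cap(h,k)}hk$, sums over pairs of words $(h,k)$ with $hk$ surjective, $\mathrm{std}(h)=f$, $\mathrm{std}(k)=g$. These make $\mathbf{ST}$ a $q$-tridendriform algebra. Coproduct on $\mathbf{ST}_+=\mathbf{ST}\oplus\mathbb{K}1$: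 $\Delta(1)=1\otimes1$ and for $f\in\mathbf{ST}_n^r$, $\Delta(f)=\sum_{j=0}^rf|^{[j]}\otimes\mathrm{std}(f|^{\{j+1,\dots,r\}})$, where for $K\subseteq[r]$ the co-restriction $f|^K$ is the word $(f(j_1),\dots,f(j_l))$ with $\{j_1<\dots<j_l\}=f^{-1}(K)$, and the empty word is identified with $1$. $q$-tridendriform algebra: bilinear $\prec,\cdot,\succ$ satisfying (1) $(a\prec b)\prec c=a\prec(b\prec c+b\succ c+q\,b\cdot c)$; (2) $(a\succ b)\prec c=a\succ(b\prec c)$; (3) $(a\prec b+a\succ b+q\,a\cdot b)\succ c=a\succ(b\succ c)$; (4) $(a\cdot b)\cdot c=a\cdot(b\cdot c)$; (5) $(a\succ b)\cdot c=a\succ(b\cdot c)$; (6) $(a\prec b)\cdot c=a\cdot(b\succ c)$; (7) $(a\cdot b)\prec c=a\cdot(b\prec c)$; $*=\prec+q\,\cdot+\succ$. $q$-tridendriform bialgebra: with unit conventions $x\succ1=x\cdot1=1\cdot x=1\prec x=0$, $1\succ x=x=x\prec1$, $1*x=x*1=x$, $(x*y)\otimes(1\circ1):=(x\circ y)\otimes1$, a linear $\Delta:H_+\to H_+\otimes H_+$ with $\Delta(1)=1\otimes1$, counit conditions $(\epsilon\otimes\mathrm{Id})\Delta(x)=1\otimes x$, $(\mathrm{Id}\otimes\epsilon)\Delta(x)=x\otimes1$, and $\Delta(x\circ y)=\sum(x_{(1)}*y_{(1)})\otimes(x_{(2)}\circ y_{(2)})$ for $\circ\in\{\succ,\cdot,\prec\}$.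 *)

theory Defs
  imports Main
begin

text \<open>An element of ST_+ (resp. ST) is a finitely supported coefficient function on words whose
  support consists of surjective words (resp. nonempty surjective words); the empty word is
  the unit 1. Elements of ST_+ (x) ST_+ are finitely supported functions on pairs of words
  (the tensor product of free modules has the pairs of basis elements as a basis).\<close>

definition wmax :: "nat list \<Rightarrow> nat" where
  "wmax w = Max (insert 0 (set w))"

definition surjw :: "nat list \<Rightarrow> bool" where
  "surjw w \<longleftrightarrow> set w = {1..wmax w}"

definition capw :: "nat list \<Rightarrow> nat list \<Rightarrow> nat" where
  "capw h k = card (set h \<inter> set k)"

text \<open>standardization: the unique surjection with the same relative order\<close>
definition stdw :: "nat list \<Rightarrow> nat list" where
  "stdw w = map (\<lambda>x. card {y \<in> set w. y \<le> x}) w"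

definition supp :: "('a \<Rightarrow> 'k::zero) \<Rightarrow> 'a set" where
  "supp x = {w. x w \<noteq> 0}"

definition inSTp :: "(nat list \<Rightarrow> 'k::zero) \<Rightarrow> bool" where
  "inSTp x \<longleftrightarrow> finite (supp x) \<and> (\<forall>w\<in>supp x. surjw w)"

definition inST :: "(nat list \<Rightarrow> 'k::zero) \<Rightarrow> bool" where
  "inST x \<longleftrightarrow> finite (supp x) \<and> (\<forall>w\<in>supp x. surjw w \<and> w \<noteq> [])"

definition delta :: "'a \<Rightarrow> 'a \<Rightarrow> 'k::{zero,one}" where
  "delta u = (\<lambda>w. if w = u then 1 else 0)"

definition vadd :: "('a \<Rightarrow> 'k::plus) \<Rightarrow> ('a \<Rightarrow> 'k) \<Rightarrow> 'a \<Rightarrow> 'k" where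
  "vadd x y = (\<lambda>w. x w + y w)"

definition smul :: "'k::times \<Rightarrow> ('a \<Rightarrow> 'k) \<Rightarrow> 'a \<Rightarrow> 'k" where
  "smul c x = (\<lambda>w. c * x w)"

text \<open>Coefficient of the word w in the products of basis surjections f, g (f, g nonempty):
  the pair (h,k) with hk = w is determined by w (h = first |f| letters).\<close>
definition succ_b :: "'k::comm_ring_1 \<Rightarrow> nat list \<Rightarrow> nat list \<Rightarrow> nat list \<Rightarrow> 'k" where
  "succ_b q f g w = (let h = take (length f) w; k = drop (length f) w in
     if length w = length f + length g \<and> surjw w \<and> stdw h = f \<and> stdw k = g \<and> wmax h < wmax k
     then q ^ capw h k else 0)"

definition dot_b :: "'k::comm_ring_1 \<Rightarrow> nat list \<Rightarrow> nat list \<Rightarrow> nat list \<Rightarrow> 'k" where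
  "dot_b q f g w = (let h = take (length f) w; k = drop (length f) w in
     if length w = length f + length g \<and> surjw w \<and> stdw h = f \<and> stdw k = g \<and> wmax h = wmax k
     then q ^ (capw h k - 1) else 0)"

definition prec_b :: "'k::comm_ring_1 \<Rightarrow> nat list \<Rightarrow> nat list \<Rightarrow> nat list \<Rightarrow> 'k" where
  "prec_b q f g w = (let h = take (length f) w; k = drop (length f) w in
     if length w = length f + length g \<and> surjw w \<and> stdw h = f \<and> stdw k = g \<and> wmax h > wmax k
     then q ^ capw h k else 0)"

definition succ_w :: "'k::comm_ring_1 \<Rightarrow> nat list \<Rightarrow> nat list \<Rightarrow> nat list \<Rightarrow> 'k" where
  "succ_w q f g = (if g = [] then (\<lambda>_. 0) else if f = [] then delta g else succ_b q f g)"

definition dot_w :: "'k::comm_ring_1 \<Rightarrow> nat list \<Rightarrow> nat list \<Rightarrow> nat list \<Rightarrow> 'k" where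
  "dot_w q f g = (if f = [] \<or> g = [] then (\<lambda>_. 0) else dot_b q f g)"

definition prec_w :: "'k::comm_ring_1 \<Rightarrow> nat list \<Rightarrow> nat list \<Rightarrow> nat list \<Rightarrow> 'k" where
  "prec_w q f g = (if f = [] then (\<lambda>_. 0) else if g = [] then delta f else prec_b q f g)"

definition star_w :: "'k::comm_ring_1 \<Rightarrow> nat list \<Rightarrow> nat list \<Rightarrow> nat list \<Rightarrow> 'k" where
  "star_w q f g = (if f = [] then delta g else if g = [] then delta f
     else (\<lambda>w. prec_b q f g w + q * dot_b q f g w + succ_b q f g w))"

definition bil :: "(nat list \<Rightarrow> nat list \<Rightarrow> nat list \<Rightarrow> 'k::comm_ring_1)
    \<Rightarrow> (nat list \<Rightarrow> 'k) \<Rightarrow> (nat list \<Rightarrow> 'k) \<Rightarrow> nat list \<Rightarrow> 'k" where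
  "bil B x y = (\<lambda>w. \<Sum>f\<in>supp x. \<Sum>g\<in>supp y. x f * y g * B f g w)"

definition succ_q where "succ_q q = bil (succ_w q)"
definition dot_q where "dot_q q = bil (dot_w q)"
definition prec_q where "prec_q q = bil (prec_w q)"

definition tens :: "('a \<Rightarrow> 'k::times) \<Rightarrow> ('a \<Rightarrow> 'k) \<Rightarrow> 'a \<times> 'a \<Rightarrow> 'k" where
  "tens a b = (\<lambda>(u, v). a u * b v)"

definition corestr :: "nat list \<Rightarrow> nat set \<Rightarrow> nat list" where
  "corestr f K = filter (\<lambda>i. i \<in> K) f"

definition cop_w :: "nat list \<Rightarrow> nat list \<times> nat list \<Rightarrow> 'k::comm_ring_1" where
  "cop_w f = (\<lambda>(u, v). \<Sum>j\<in>{0..wmax f}.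
      if u = corestr f {1..j} \<and> v = stdw (corestr f {j+1..wmax f}) then 1 else 0)"

definition cop :: "(nat list \<Rightarrow> 'k::comm_ring_1) \<Rightarrow> nat list \<times> nat list \<Rightarrow> 'k" where
  "cop x = (\<lambda>p. \<Sum>f\<in>supp x. x f * cop_w f p)"

text \<open>counit epsilon(1) = 1, epsilon(ST) = 0, and the maps (eps (x) Id), (Id (x) eps)
  from ST_+ (x) ST_+ to K (x) ST_+ = ST_+ resp. ST_+ (x) K = ST_+\<close>
definition eps_id :: "(nat list \<times> nat list \<Rightarrow> 'k::comm_ring_1) \<Rightarrow> nat list \<Rightarrow> 'k" where
  "eps_id T = (\<lambda>v. \<Sum>u\<in>{u. T (u, v) \<noteq> 0}. delta [] u * T (u, v))"

definition id_eps :: "(nat list \<times> nat list \<Rightarrow> 'k::comm_ring_1) \<Rightarrow> nat list \<Rightarrow> 'k" where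
  "id_eps T = (\<lambda>u. \<Sum>v\<in>{v. T (u, v) \<noteq> 0}. delta [] v * T (u, v))"

text \<open>Right-hand side sum (x_(1) * y_(1)) (x) (x_(2) o y_(2)) of the compatibility
  relation, with the convention (x * y) (x) (1 o 1) := (x o y) (x) 1.\<close>
definition compat_rhs ::
  "'k::comm_ring_1 \<Rightarrow> ('k \<Rightarrow> nat list \<Rightarrow> nat list \<Rightarrow> nat list \<Rightarrow> 'k)
     \<Rightarrow> (nat list \<Rightarrow> 'k) \<Rightarrow> (nat list \<Rightarrow> 'k) \<Rightarrow> nat list \<times> nat list \<Rightarrow> 'k" where
  "compat_rhs q opw x y = (\<lambda>p.
     \<Sum>(a, b)\<in>supp (cop x). \<Sum>(c, d)\<in>supp (cop y). cop x (a, b) * cop y (c, d) *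
       (if b = [] \<and> d = [] then tens (opw q a c) (delta []) p
        else tens (star_w q a c) (opw q b d) p))"

end

(* Each of the products \<succ>, \<cdot>, \<prec>, * of two surjections f, g is the sum of the surjective words
   h k with std h = f and std k = g, weighted by a quantity depending only on the relative order of
   the letters: if h and k have n letters in common, the weight is q^n if max h < max k for \<succ>,
   q^(n - 1) if max h = max k for \<cdot>, q^n if max h > max k for \<prec> (and 0 otherwise), and q^n
   for *. Hence each tridendriform axiom reduces to an identity between the weights of the three
   blocks x, y, z of a word, which follows by comparing the maxima of the blocks and from
   |A \<inter> B| + |(A \<union> B) \<inter> C| = |B \<inter> C| + |A \<inter> (B \<union> C)|.

   For the compatibility with the coproduct, the term (w|^[t], std w|^{>t}) of the coproduct of a
   summand w of a product of f and g is matched with the pair of terms of the coproducts of f and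
   g obtained by cutting them at the ranks of t in the two halves of w. This matching is bijective,
   and the weight of w factors as the weight of its letters above t times q^n, n the number of
   common letters below t, which is the weight of the product * of the lower parts. *)

theory Submission
  imports Defs
begin

lemma sum_eq_single_nonzero:
  assumes "finite U" "\<And>u. u \<in> U \<Longrightarrow> u \<noteq> u0 \<Longrightarrow> F u = 0" "F u0 \<noteq> 0 \<Longrightarrow> u0 \<in> U"
  shows "(\<Sum>u\<in>U. F u) = F u0"
proof -
  have "(\<Sum>u\<in>U. F u) = (\<Sum>u\<in>U. if u = u0 then F u0 else 0)"
    using assms(2) by (intro sum.cong) auto
  then show ?thesis using assms(1,3) by (auto simp: sum.delta)
qed

lemma sum_commute_3:
  "(\<Sum>u\<in>U. \<Sum>x\<in>X. \<Sum>y\<in>Y. (T u x y :: 'a::comm_monoid_add)) = (\<Sum>x\<in>X. \<Sum>y\<in>Y. \<Sum>u\<in>U. T u x y)"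
proof -
  have "(\<Sum>u\<in>U. \<Sum>x\<in>X. \<Sum>y\<in>Y. T u x y) = (\<Sum>x\<in>X. \<Sum>u\<in>U. \<Sum>y\<in>Y. T u x y)"
    by (rule sum.swap)
  also have "\<dots> = (\<Sum>x\<in>X. \<Sum>y\<in>Y. \<Sum>u\<in>U. T u x y)"
    by (rule sum.cong[OF refl], rule sum.swap)
  finally show ?thesis .
qed

lemma sum_bij_nonzero:
  assumes fin: "finite S" "finite T"
    and S: "\<And>a. a \<in> S \<Longrightarrow> g a \<noteq> 0 \<Longrightarrow> j a \<in> T \<and> i (j a) = a \<and> h (j a) = g a"
    and T: "\<And>b. b \<in> T \<Longrightarrow> h b \<noteq> 0 \<Longrightarrow> i b \<in> S \<and> j (i b) = b \<and> g (i b) = h b"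
  shows "sum g S = (sum h T :: 'k::comm_monoid_add)"
proof -
  have "sum g S = sum g {a\<in>S. g a \<noteq> 0}" by (rule sum.mono_neutral_right) (use fin in auto)
  also have "\<dots> = sum h {b\<in>T. h b \<noteq> 0}"
  proof (rule sum.reindex_bij_witness[where i=i and j=j])
    fix a assume "a \<in> {a\<in>S. g a \<noteq> 0}"
    then show "i (j a) = a" "j a \<in> {b\<in>T. h b \<noteq> 0}" "h (j a) = g a" using S by auto
  next
    fix b assume "b \<in> {b\<in>T. h b \<noteq> 0}"
    then show "j (i b) = b" "i b \<in> {a\<in>S. g a \<noteq> 0}" using T by auto
  qed
  also have "\<dots> = sum h T" by (rule sum.mono_neutral_left) (use fin in auto)
  finally show ?thesis .
qed

lemma card_Int_Un_Int_assoc: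
  assumes "finite A" "finite B" "finite C"
  shows "card (A \<inter> B) + card ((A \<union> B) \<inter> C) = card (B \<inter> C) + card (A \<inter> (B \<union> C))"
proof -
  have "(A \<inter> C) \<union> (B \<inter> C) = (A \<union> B) \<inter> C" "(A \<inter> C) \<inter> (B \<inter> C) = A \<inter> B \<inter> C"
    "(A \<inter> B) \<union> (A \<inter> C) = A \<inter> (B \<union> C)" "(A \<inter> B) \<inter> (A \<inter> C) = A \<inter> B \<inter> C"
    by auto
  then show ?thesis
    using card_Un_Int[of "A \<inter> C" "B \<inter> C"] card_Un_Int[of "A \<inter> B" "A \<inter> C"] assms
    by simp
qed

lemma mult_power_pred: "0 < n \<Longrightarrow> (q::'a::monoid_mult) * q ^ (n - Suc 0) = q ^ n"
  by (cases n) auto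

lemma strict_mono_on_inv_into:
  fixes \<phi> :: "'a::linorder \<Rightarrow> 'b::linorder"
  assumes "strict_mono_on A \<phi>"
  shows "strict_mono_on (\<phi> ` A) (inv_into A \<phi>)"
proof (rule strict_mono_onI)
  fix a b assume "a \<in> \<phi> ` A" "b \<in> \<phi> ` A" "a < b"
  then obtain x y where "x \<in> A" "y \<in> A" "a = \<phi> x" "b = \<phi> y" "\<phi> x < \<phi> y" by auto
  then show "inv_into A \<phi> a < inv_into A \<phi> b"
    using strict_mono_on_less[OF assms] inv_into_f_f[OF strict_mono_on_imp_inj_on[OF assms]] by simp
qed

lemma strict_mono_on_glue:
  fixes t :: nat
  assumes "strict_mono_on {z \<in> S. P z} \<gamma>1" "strict_mono_on {z \<in> S. \<not> P z} \<gamma>2"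
    and "\<And>z. z \<in> S \<Longrightarrow> P z \<Longrightarrow> \<gamma>1 z \<le> t" "\<And>z. z \<in> S \<Longrightarrow> \<not> P z \<Longrightarrow> 1 \<le> \<gamma>2 z"
    and "\<And>x y. x \<in> S \<Longrightarrow> y \<in> S \<Longrightarrow> x < y \<Longrightarrow> P y \<Longrightarrow> P x"
  shows "strict_mono_on S (\<lambda>z. if P z then \<gamma>1 z else \<gamma>2 z + t)"
proof (rule strict_mono_onI)
  fix x y assume xy: "x \<in> S" "y \<in> S" "x < y"
  show "(if P x then \<gamma>1 x else \<gamma>2 x + t) < (if P y then \<gamma>1 y else \<gamma>2 y + t)"
  proof (cases "P y")
    case True
    then have "P x" by (rule assms(5)[OF xy])
    then have "\<gamma>1 x < \<gamma>1 y" using strict_mono_onD[OF assms(1)] xy True by simp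
    then show ?thesis using True \<open>P x\<close> by simp
  next
    case False
    show ?thesis
    proof (cases "P x")
      case True
      then show ?thesis using assms(3)[OF xy(1) True] assms(4)[OF xy(2) False] False by simp
    next
      case notP: False
      then have "\<gamma>2 x < \<gamma>2 y" using strict_mono_onD[OF assms(2)] xy False by simp
      then show ?thesis using False notP by simp
    qed
  qed
qed

section \<open>Standardization\<close>

definition rank_in :: "nat list \<Rightarrow> nat \<Rightarrow> nat" where
  "rank_in w x = card {y \<in> set w. y \<le> x}"

lemma stdw_eq_map_rank_in: "stdw w = map (rank_in w) w"
  by (simp add: stdw_def rank_in_def)

lemma rank_in_mono: "x \<le> x' \<Longrightarrow> rank_in w x \<le> rank_in w x'"
  unfolding rank_in_def by (rule card_mono) auto

lemma rank_in_less:
  assumes "x < x'" "x' \<in> set w"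
  shows "rank_in w x < rank_in w x'"
proof -
  have "x' \<in> {y \<in> set w. y \<le> x'}" "x' \<notin> {y \<in> set w. y \<le> x}"
    using assms by auto
  moreover have "{y \<in> set w. y \<le> x} \<subseteq> {y \<in> set w. y \<le> x'}"
    using assms by auto
  ultimately have "{y \<in> set w. y \<le> x} \<subset> {y \<in> set w. y \<le> x'}"
    by blast
  then show ?thesis
    unfolding rank_in_def by (rule psubset_card_mono[rotated]) simp
qed

lemma strict_mono_on_rank_in: "strict_mono_on (set w) (rank_in w)"
  by (intro strict_mono_onI rank_in_less)

lemma rank_in_le_iff: "x \<in> set w \<Longrightarrow> rank_in w x \<le> rank_in w t \<longleftrightarrow> x \<le> t"
  using rank_in_mono[of x t w] rank_in_less[of t x w] by (cases "x \<le> t") auto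

lemma rank_in_le_card: "rank_in w x \<le> card (set w)"
  unfolding rank_in_def by (rule card_mono) auto

lemma rank_in_map:
  assumes "strict_mono_on (set w) \<phi>" "x \<in> set w"
  shows "rank_in (map \<phi> w) (\<phi> x) = rank_in w x"
proof -
  have "{y \<in> set (map \<phi> w). y \<le> \<phi> x} = \<phi> ` {y \<in> set w. y \<le> x}"
    using strict_mono_on_less_eq[OF assms(1) _ assms(2)] by auto
  moreover have "inj_on \<phi> {y \<in> set w. y \<le> x}"
    by (rule inj_on_subset[OF strict_mono_on_imp_inj_on[OF assms(1)]]) auto
  ultimately show ?thesis unfolding rank_in_def by (simp add: card_image)
qed

lemma stdw_map_strict_mono: "strict_mono_on (set w) \<phi> \<Longrightarrow> stdw (map \<phi> w) = stdw w"
  by (simp add: stdw_eq_map_rank_in rank_in_map)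

lemma wmax_Nil [simp]: "wmax [] = 0"
  by (simp add: wmax_def)

lemma le_wmax: "x \<in> set w \<Longrightarrow> x \<le> wmax w"
  unfolding wmax_def by simp

lemma wmax_leI: "(\<And>x. x \<in> set w \<Longrightarrow> x \<le> m) \<Longrightarrow> wmax w \<le> m"
  unfolding wmax_def by simp

lemma wmax_in: "w \<noteq> [] \<Longrightarrow> wmax w \<in> set w"
  unfolding wmax_def by (simp add: Max_insert max_def)

lemma wmax_append: "wmax (a @ b) = max (wmax a) (wmax b)"
proof -
  have "insert 0 (set (a @ b)) = insert 0 (set a) \<union> insert 0 (set b)" by auto
  then show ?thesis
    unfolding wmax_def using Max_Un[of "insert 0 (set a)" "insert 0 (set b)"] by simp
qed

lemma wmax_map_strict_mono:
  assumes "strict_mono_on (set w) \<phi>" "w \<noteq> []"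
  shows "wmax (map \<phi> w) = \<phi> (wmax w)"
proof (rule antisym)
  show "wmax (map \<phi> w) \<le> \<phi> (wmax w)"
  proof (rule wmax_leI)
    fix y assume "y \<in> set (map \<phi> w)"
    then obtain x where "x \<in> set w" "y = \<phi> x" by auto
    then show "y \<le> \<phi> (wmax w)"
      using strict_mono_on_leD[OF assms(1) _ wmax_in[OF assms(2)] le_wmax] by simp
  qed
  show "\<phi> (wmax w) \<le> wmax (map \<phi> w)"
    using wmax_in[OF assms(2)] by (intro le_wmax) auto
qed

lemma surjw_iff_interval: "surjw w \<longleftrightarrow> (\<exists>m. set w = {1..m})"
proof
  assume "\<exists>m. set w = {1..m}"
  then obtain m where m: "set w = {1..m}" by blast
  have "wmax w = m"
  proof (cases "m = 0")
    case False
    then have "w \<noteq> []" using m by auto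
    then have "wmax w \<in> {1..m}" using m wmax_in[of w] by auto
    moreover have "m \<le> wmax w" using m False by (intro le_wmax) auto
    ultimately show ?thesis by auto
  qed (use m in \<open>simp add: wmax_def\<close>)
  then show "surjw w" using m by (simp add: surjw_def)
qed (auto simp: surjw_def)

lemma surjw_Nil [simp]: "surjw []"
  by (simp add: surjw_def)

lemma set_stdw: "set (stdw w) = {1..card (set w)}"
proof -
  have inj: "inj_on (rank_in w) (set w)"
    by (rule strict_mono_on_imp_inj_on[OF strict_mono_on_rank_in])
  have "rank_in w x \<in> {1..card (set w)}" if "x \<in> set w" for x
    using that rank_in_le_card[of w x] card_mono[of "{y \<in> set w. y \<le> x}" "{x}"]
    by (auto simp: rank_in_def)
  then have "rank_in w ` set w \<subseteq> {1..card (set w)}" by auto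
  moreover have "card (rank_in w ` set w) = card {1..card (set w)}"
    using card_image[OF inj] by simp
  ultimately show ?thesis
    by (simp add: stdw_eq_map_rank_in card_subset_eq)
qed

lemma surjw_stdw: "surjw (stdw w)"
  using set_stdw surjw_iff_interval by blast

lemma length_stdw [simp]: "length (stdw w) = length w"
  by (simp add: stdw_def)

lemma stdw_eq_Nil_iff [simp]: "stdw w = [] \<longleftrightarrow> w = []" "[] = stdw w \<longleftrightarrow> w = []"
  by (auto simp: stdw_def)

lemma rank_in_surjw:
  assumes "surjw w" "x \<in> set w"
  shows "rank_in w x = x"
proof -
  have "{y \<in> set w. y \<le> x} = {1..x}" using assms by (auto simp: surjw_def)
  then show ?thesis by (simp add: rank_in_def)
qed

lemma stdw_surjw: "surjw w \<Longrightarrow> stdw w = w"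
  by (simp add: stdw_eq_map_rank_in rank_in_surjw map_idI)

lemma stdw_eq_imp_map:
  assumes "stdw x = stdw y"
  obtains \<phi> where "strict_mono_on (set x) \<phi>" "y = map \<phi> x"
proof
  let ?\<beta> = "inv_into (set y) (rank_in y)"
  have "y = map ?\<beta> (stdw y)"
    by (simp add: stdw_eq_map_rank_in map_idI
        inv_into_f_f[OF strict_mono_on_imp_inj_on[OF strict_mono_on_rank_in]])
  moreover have "map (?\<beta> \<circ> rank_in x) x = map ?\<beta> (stdw x)"
    by (simp add: stdw_eq_map_rank_in)
  ultimately show "y = map (?\<beta> \<circ> rank_in x) x"
    using assms by simp
  have "rank_in x ` set x = rank_in y ` set y"
    using assms by (metis set_map stdw_eq_map_rank_in)
  then show "strict_mono_on (set x) (?\<beta> \<circ> rank_in x)"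
    using monotone_on_o[OF strict_mono_on_inv_into[OF strict_mono_on_rank_in]
        strict_mono_on_rank_in]
    by simp
qed

lemma stdw_halves_imp_map:
  assumes "stdw (take (length a) u) = stdw a" "stdw (drop (length a) u) = stdw b"
  obtains \<alpha> \<beta> where "strict_mono_on (set a) \<alpha>" "strict_mono_on (set b) \<beta>" "u = map \<alpha> a @ map \<beta> b"
proof -
  obtain \<alpha> \<beta> where "strict_mono_on (set a) \<alpha>" "take (length a) u = map \<alpha> a"
    "strict_mono_on (set b) \<beta>" "drop (length a) u = map \<beta> b"
    using stdw_eq_imp_map assms by metis
  then show ?thesis using that by (metis append_take_drop_id)
qed

lemma stdw_shift:
  assumes "set x = {t+1..M}"
  shows "stdw x = map (\<lambda>y. y - t) x"
proof -
  have mono: "strict_mono_on (set x) (\<lambda>y. y - t)"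
    using assms by (intro strict_mono_onI) auto
  have "(\<lambda>y. y - t) ` {t+1..M} = {1..M - t}"
  proof
    show "{1..M - t} \<subseteq> (\<lambda>y. y - t) ` {t+1..M}"
    proof
      fix z assume "z \<in> {1..M - t}"
      then have "z + t \<in> {t+1..M}" "z = (z + t) - t" by auto
      then show "z \<in> (\<lambda>y. y - t) ` {t+1..M}" by blast
    qed
  qed auto
  then have "surjw (map (\<lambda>y. y - t) x)"
    using assms surjw_iff_interval by auto
  then show ?thesis
    using stdw_map_strict_mono[OF mono] stdw_surjw by metis
qed

lemma capw_map_strict_mono:
  assumes "strict_mono_on (set (h @ k)) \<phi>"
  shows "capw (map \<phi> h) (map \<phi> k) = capw h k"
proof -
  have inj: "inj_on \<phi> (set h \<union> set k)"
    using strict_mono_on_imp_inj_on[OF assms] by simp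
  then have "\<phi> ` set h \<inter> \<phi> ` set k = \<phi> ` (set h \<inter> set k)"
    by (auto simp: inj_on_def)
  moreover have "inj_on \<phi> (set h \<inter> set k)" using inj by (rule inj_on_subset) auto
  ultimately show ?thesis by (simp add: capw_def card_image)
qed

section \<open>Weighted products of surjections\<close>

text \<open>The coefficient of w in the sum of c h k \<cdot> h k over the pairs of words with std h = f,
  std k = g and h k surjective.\<close>

definition wprod :: "(nat list \<Rightarrow> nat list \<Rightarrow> 'k::comm_ring_1)
    \<Rightarrow> nat list \<Rightarrow> nat list \<Rightarrow> nat list \<Rightarrow> 'k" where
  "wprod c f g w = (if length w = length f + length g \<and> surjw w \<and> stdw (take (length f) w) = f
      \<and> stdw (drop (length f) w) = g then c (take (length f) w) (drop (length f) w) else 0)"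

definition wt_succ :: "'k::comm_ring_1 \<Rightarrow> nat list \<Rightarrow> nat list \<Rightarrow> 'k" where
  "wt_succ q h k = (if wmax h < wmax k then q ^ capw h k else 0)"

definition wt_dot :: "'k::comm_ring_1 \<Rightarrow> nat list \<Rightarrow> nat list \<Rightarrow> 'k" where
  "wt_dot q h k = (if wmax h = wmax k then q ^ (capw h k - 1) else 0)"

definition wt_prec :: "'k::comm_ring_1 \<Rightarrow> nat list \<Rightarrow> nat list \<Rightarrow> 'k" where
  "wt_prec q h k = (if wmax k < wmax h then q ^ capw h k else 0)"

definition wt_star :: "'k::comm_ring_1 \<Rightarrow> nat list \<Rightarrow> nat list \<Rightarrow> 'k" where
  "wt_star q h k = q ^ capw h k"

lemma wprod_nonzeroD:
  "wprod c f g w \<noteq> 0 \<Longrightarrow> length w = length f + length g \<and> surjw w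
     \<and> stdw (take (length f) w) = f \<and> stdw (drop (length f) w) = g"
  by (auto simp: wprod_def split: if_splits)

lemma succ_w_eq_wprod: "f \<noteq> [] \<Longrightarrow> g \<noteq> [] \<Longrightarrow> succ_w q f g = wprod (wt_succ q) f g"
  by (auto simp: fun_eq_iff succ_w_def succ_b_def wprod_def Let_def wt_succ_def)

lemma dot_w_eq_wprod: "f \<noteq> [] \<Longrightarrow> g \<noteq> [] \<Longrightarrow> dot_w q f g = wprod (wt_dot q) f g"
  by (auto simp: fun_eq_iff dot_w_def dot_b_def wprod_def Let_def wt_dot_def)

lemma prec_w_eq_wprod: "f \<noteq> [] \<Longrightarrow> g \<noteq> [] \<Longrightarrow> prec_w q f g = wprod (wt_prec q) f g"
  by (auto simp: fun_eq_iff prec_w_def prec_b_def wprod_def Let_def wt_prec_def)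

lemma capw_Nil [simp]: "capw [] k = 0" "capw h [] = 0"
  by (simp_all add: capw_def)

lemma capw_pos: "h \<noteq> [] \<Longrightarrow> k \<noteq> [] \<Longrightarrow> wmax h = wmax k \<Longrightarrow> 0 < capw h k"
  unfolding capw_def using wmax_in[of h] wmax_in[of k]
  by (metis card_gt_0_iff empty_iff finite_Int finite_set IntI)

lemma wt_prec_succ_dot:
  assumes "h \<noteq> []" "k \<noteq> []"
  shows "wt_prec q h k + wt_succ q h k + q * wt_dot q h k = wt_star q h k"
  using capw_pos[OF assms]
  by (cases "wmax h" "wmax k" rule: linorder_cases)
     (auto simp: wt_prec_def wt_succ_def wt_dot_def wt_star_def mult_power_pred)

definition relabel_invariant :: "(nat list \<Rightarrow> nat list \<Rightarrow> 'k) \<Rightarrow> bool" where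
  "relabel_invariant c \<longleftrightarrow> (\<forall>h k \<phi>. h \<noteq> [] \<longrightarrow> k \<noteq> [] \<longrightarrow> strict_mono_on (set (h @ k)) \<phi>
     \<longrightarrow> c (map \<phi> h) (map \<phi> k) = c h k)"

lemma relabel_invariantD:
  "relabel_invariant c \<Longrightarrow> h \<noteq> [] \<Longrightarrow> k \<noteq> [] \<Longrightarrow> strict_mono_on (set (h @ k)) \<phi>
     \<Longrightarrow> c (map \<phi> h) (map \<phi> k) = c h k"
  unfolding relabel_invariant_def by blast

lemma relabel_wmax_capw:
  assumes ne: "h \<noteq> []" "k \<noteq> []" and mono: "strict_mono_on (set (h @ k)) \<phi>"
  shows "wmax (map \<phi> h) < wmax (map \<phi> k) \<longleftrightarrow> wmax h < wmax k"
    and "wmax (map \<phi> k) < wmax (map \<phi> h) \<longleftrightarrow> wmax k < wmax h"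
    and "wmax (map \<phi> h) = wmax (map \<phi> k) \<longleftrightarrow> wmax h = wmax k"
    and "capw (map \<phi> h) (map \<phi> k) = capw h k"
proof -
  have "wmax (map \<phi> h) = \<phi> (wmax h)" "wmax (map \<phi> k) = \<phi> (wmax k)"
    using mono ne by (auto intro: wmax_map_strict_mono monotone_on_subset)
  moreover have "wmax h \<in> set (h @ k)" "wmax k \<in> set (h @ k)"
    using wmax_in ne by auto
  ultimately show "wmax (map \<phi> h) < wmax (map \<phi> k) \<longleftrightarrow> wmax h < wmax k"
    "wmax (map \<phi> k) < wmax (map \<phi> h) \<longleftrightarrow> wmax k < wmax h"
    "wmax (map \<phi> h) = wmax (map \<phi> k) \<longleftrightarrow> wmax h = wmax k"
    using strict_mono_on_less[OF mono] strict_mono_on_eq[OF mono] by simp_all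
  show "capw (map \<phi> h) (map \<phi> k) = capw h k"
    by (rule capw_map_strict_mono[OF mono])
qed

lemma relabel_invariant_weights:
  "relabel_invariant (wt_succ q)" "relabel_invariant (wt_dot q)"
  "relabel_invariant (wt_prec q)" "relabel_invariant (wt_star q)"
  unfolding relabel_invariant_def wt_succ_def wt_dot_def wt_prec_def wt_star_def
  by (simp_all add: relabel_wmax_capw)

lemma wprod_stdw:
  assumes c: "relabel_invariant c" and ne: "f \<noteq> []" "g \<noteq> []"
    and len: "length y = length f + length g"
  shows "wprod c f g (stdw y) = (if stdw (take (length f) y) = f \<and> stdw (drop (length f) y) = g
    then c (take (length f) y) (drop (length f) y) else 0)"
proof -
  have "y \<noteq> []" using len ne by auto
  then have "c (map (rank_in y) (take (length f) y)) (map (rank_in y) (drop (length f) y))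
      = c (take (length f) y) (drop (length f) y)"
    using relabel_invariantD[OF c, of "take (length f) y" "drop (length f) y" "rank_in y"]
      strict_mono_on_rank_in[of y] ne len by simp
  moreover have "stdw (map (rank_in y) (take (length f) y)) = stdw (take (length f) y)"
    "stdw (map (rank_in y) (drop (length f) y)) = stdw (drop (length f) y)"
    using stdw_map_strict_mono[OF monotone_on_subset[OF strict_mono_on_rank_in set_take_subset]]
      stdw_map_strict_mono[OF monotone_on_subset[OF strict_mono_on_rank_in set_drop_subset]]
    by blast+
  ultimately show ?thesis
    using len surjw_stdw[of y]
    by (simp add: wprod_def stdw_eq_map_rank_in[of y] take_map drop_map)
qed

text \<open>The coefficient of w in a product of three surjections f, g, h whose summand x y z
  (blocks of the lengths of f, g, h) has weight F x y z.\<close>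

definition coeff3 :: "(nat list \<Rightarrow> nat list \<Rightarrow> nat list \<Rightarrow> 'k::zero)
    \<Rightarrow> nat list \<Rightarrow> nat list \<Rightarrow> nat list \<Rightarrow> nat list \<Rightarrow> 'k" where
  "coeff3 F f g h w = (let x = take (length f) w; y = take (length g) (drop (length f) w);
      z = drop (length f + length g) w in
    if length w = length f + length g + length h \<and> surjw w
       \<and> stdw x = f \<and> stdw y = g \<and> stdw z = h then F x y z else 0)"

lemma coeff3_cong:
  assumes "f \<noteq> []" "g \<noteq> []" "h \<noteq> []"
    and "\<And>x y z. x \<noteq> [] \<Longrightarrow> y \<noteq> [] \<Longrightarrow> z \<noteq> [] \<Longrightarrow> F x y z = G x y z"
  shows "coeff3 F f g h w = coeff3 G f g h w"
proof -
  have "F x y z = G x y z" if "stdw x = f" "stdw y = g" "stdw z = h" for x y z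
    using that assms by (metis stdw_eq_Nil_iff(1))
  then show ?thesis unfolding coeff3_def Let_def by presburger
qed

lemma wprod_stdw_take_coeff3:
  fixes w :: "nat list"
  assumes c1: "relabel_invariant c1" and ne: "f \<noteq> []" "g \<noteq> []" "h \<noteq> []"
  defines "y \<equiv> take (length f + length g) w"
  shows "wprod c1 f g (stdw y) * wprod c2 (stdw y) h w
    = coeff3 (\<lambda>x y z. c1 x y * c2 (x @ y) z) f g h w"
proof (cases "length w = length f + length g + length h")
  case True
  define x1 x2 x3 where "x1 = take (length f) w" and "x2 = take (length g) (drop (length f) w)"
    and "x3 = drop (length f + length g) w"
  have len: "length y = length f + length g" using True by (simp add: y_def)
  have y: "take (length f) y = x1" "drop (length f) y = x2" "y = x1 @ x2"
    by (simp_all add: y_def x1_def x2_def take_add min_def drop_take)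
  have "wprod c2 (stdw y) h w = (if surjw w \<and> stdw x3 = h then c2 (x1 @ x2) x3 else 0)"
    using True len by (simp add: wprod_def y_def x3_def flip: y(3))
  moreover have "coeff3 (\<lambda>x y z. c1 x y * c2 (x @ y) z) f g h w
      = (if surjw w \<and> stdw x1 = f \<and> stdw x2 = g \<and> stdw x3 = h
         then c1 x1 x2 * c2 (x1 @ x2) x3 else 0)"
    using True by (simp add: coeff3_def Let_def flip: x1_def x2_def x3_def)
  ultimately show ?thesis
    unfolding wprod_stdw[OF c1 ne(1,2) len] y(1,2) by simp
next
  case False
  then have "length w \<noteq> length (stdw y) + length h" using ne(3) by (simp add: y_def min_def)
  then show ?thesis using False by (simp add: wprod_def coeff3_def Let_def)
qed

lemma wprod_stdw_drop_coeff3: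
  fixes f w :: "nat list"
  assumes c1: "relabel_invariant c1" and ne: "g \<noteq> []" "h \<noteq> []"
  defines "y \<equiv> drop (length f) w"
  shows "wprod c1 g h (stdw y) * wprod c2 f (stdw y) w
    = coeff3 (\<lambda>x y z. c1 y z * c2 x (y @ z)) f g h w"
proof (cases "length w = length f + length g + length h")
  case True
  define x1 x2 x3 where "x1 = take (length f) w" and "x2 = take (length g) (drop (length f) w)"
    and "x3 = drop (length f + length g) w"
  have len: "length y = length g + length h" using True by (simp add: y_def)
  have y: "take (length g) y = x2" "drop (length g) y = x3" "y = x2 @ x3"
    by (simp_all add: y_def x2_def x3_def add.commute)
      (metis append_take_drop_id drop_drop add.commute)
  have "wprod c2 f (stdw y) w = (if surjw w \<and> stdw x1 = f then c2 x1 (x2 @ x3) else 0)"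
    using True len by (simp add: wprod_def y_def x1_def flip: y(3))
  moreover have "coeff3 (\<lambda>x y z. c1 y z * c2 x (y @ z)) f g h w
      = (if surjw w \<and> stdw x1 = f \<and> stdw x2 = g \<and> stdw x3 = h
         then c1 x2 x3 * c2 x1 (x2 @ x3) else 0)"
    using True by (simp add: coeff3_def Let_def flip: x1_def x2_def x3_def)
  ultimately show ?thesis
    unfolding wprod_stdw[OF c1 ne len] y(1,2) by simp
next
  case False
  then have "length (stdw y) \<noteq> length g + length h \<or> length w \<noteq> length f + length (stdw y)"
    by (simp add: y_def)
  then show ?thesis using False by (auto simp: wprod_def coeff3_def Let_def)
qed

text \<open>In a nested product only the intermediate word u = std of the relevant block of w
  contributes.\<close>

lemma sum_wprod_left:
  assumes c1: "relabel_invariant c1" and ne: "f \<noteq> []" "g \<noteq> []" "h \<noteq> []"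
    and U: "finite U" "\<And>u. wprod c1 f g u \<noteq> 0 \<Longrightarrow> u \<in> U"
    and B: "\<And>u. u \<noteq> [] \<Longrightarrow> B u h = wprod c2 u h"
  shows "(\<Sum>u\<in>U. wprod c1 f g u * B u h w) = coeff3 (\<lambda>x y z. c1 x y * c2 (x @ y) z) f g h w"
proof -
  define y where "y = take (length f + length g) w"
  have collapse: "wprod c1 f g u * B u h w = wprod c1 f g u * wprod c2 u h w" for u
  proof (cases "wprod c1 f g u = 0")
    case False
    then have "u \<noteq> []" using wprod_nonzeroD[OF False] ne by auto
    then show ?thesis using B by simp
  qed simp
  have others: "wprod c1 f g u * wprod c2 u h w = 0" if "u \<noteq> stdw y" for u
  proof (rule ccontr)
    assume "wprod c1 f g u * wprod c2 u h w \<noteq> 0"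
    then have "wprod c1 f g u \<noteq> 0" "wprod c2 u h w \<noteq> 0" by auto
    then have "length u = length f + length g" "stdw (take (length u) w) = u"
      by (meson wprod_nonzeroD)+
    then show False using that by (metis y_def)
  qed
  have "(\<Sum>u\<in>U. wprod c1 f g u * B u h w) = wprod c1 f g (stdw y) * wprod c2 (stdw y) h w"
    unfolding collapse
    by (rule sum_eq_single_nonzero[OF U(1)]) (use others in blast, metis U(2) mult_zero_left)
  then show ?thesis
    unfolding y_def wprod_stdw_take_coeff3[OF c1 ne] .
qed

lemma sum_wprod_right:
  assumes c1: "relabel_invariant c1" and ne: "f \<noteq> []" "g \<noteq> []" "h \<noteq> []"
    and U: "finite U" "\<And>u. wprod c1 g h u \<noteq> 0 \<Longrightarrow> u \<in> U"
    and B: "\<And>u. u \<noteq> [] \<Longrightarrow> B f u = wprod c2 f u"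
  shows "(\<Sum>u\<in>U. wprod c1 g h u * B f u w) = coeff3 (\<lambda>x y z. c1 y z * c2 x (y @ z)) f g h w"
proof -
  define y where "y = drop (length f) w"
  have collapse: "wprod c1 g h u * B f u w = wprod c1 g h u * wprod c2 f u w" for u
  proof (cases "wprod c1 g h u = 0")
    case False
    then have "u \<noteq> []" using wprod_nonzeroD[OF False] ne by auto
    then show ?thesis using B by simp
  qed simp
  have others: "wprod c1 g h u * wprod c2 f u w = 0" if "u \<noteq> stdw y" for u
  proof (rule ccontr)
    assume "wprod c1 g h u * wprod c2 f u w \<noteq> 0"
    then have "wprod c2 f u w \<noteq> 0" by auto
    then have "stdw (drop (length f) w) = u"
      by (meson wprod_nonzeroD)
    then show False using that by (metis y_def)
  qed
  have "(\<Sum>u\<in>U. wprod c1 g h u * B f u w) = wprod c1 g h (stdw y) * wprod c2 f (stdw y) w"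
    unfolding collapse
    by (rule sum_eq_single_nonzero[OF U(1)]) (use others in blast, metis U(2) mult_zero_left)
  then show ?thesis
    unfolding y_def wprod_stdw_drop_coeff3[OF c1 ne(2,3)] .
qed

section \<open>The tridendriform axioms\<close>

context
  fixes x y z :: "nat list" and q :: "'k::comm_ring_1"
  assumes ne: "x \<noteq> []" "y \<noteq> []" "z \<noteq> []"
begin

lemma capw_assoc: "capw x y + capw (x @ y) z = capw y z + capw x (y @ z)"
  by (simp add: capw_def card_Int_Un_Int_assoc)

lemma capw_pos_blocks:
  "wmax x = wmax y \<Longrightarrow> 0 < capw x y"
  "wmax y = wmax z \<Longrightarrow> 0 < capw y z"
  "max (wmax x) (wmax y) = wmax z \<Longrightarrow> 0 < capw (x @ y) z"
  "wmax x = max (wmax y) (wmax z) \<Longrightarrow> 0 < capw x (y @ z)"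
  using capw_pos[of x y] capw_pos[of y z] capw_pos[of "x @ y" z] capw_pos[of x "y @ z"] ne
  by (auto simp: wmax_append)

text \<open>The seven axioms, in the order of the definition, on the level of the weights of the three
  blocks x, y, z of a word: both sides vanish unless the same inequalities hold between the maxima
  of the blocks, and then the exponents agree by capw_assoc.\<close>

lemma wt_assoc:
  shows "wt_prec q x y * wt_prec q (x @ y) z = wt_star q y z * wt_prec q x (y @ z)" (is ?A1)
    and "wt_succ q x y * wt_prec q (x @ y) z = wt_prec q y z * wt_succ q x (y @ z)" (is ?A2)
    and "wt_star q x y * wt_succ q (x @ y) z = wt_succ q y z * wt_succ q x (y @ z)" (is ?A3)
    and "wt_dot q x y * wt_dot q (x @ y) z = wt_dot q y z * wt_dot q x (y @ z)" (is ?A4)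
    and "wt_succ q x y * wt_dot q (x @ y) z = wt_dot q y z * wt_succ q x (y @ z)" (is ?A5)
    and "wt_prec q x y * wt_dot q (x @ y) z = wt_succ q y z * wt_dot q x (y @ z)" (is ?A6)
    and "wt_dot q x y * wt_prec q (x @ y) z = wt_prec q y z * wt_dot q x (y @ z)" (is ?A7)
proof -
  have "?A1 \<and> ?A2 \<and> ?A3 \<and> ?A4 \<and> ?A5 \<and> ?A6 \<and> ?A7"
    using capw_assoc capw_pos_blocks
    by (cases "wmax y" "wmax z" rule: linorder_cases; cases "wmax x" "wmax y" rule: linorder_cases)
       (auto simp: wt_prec_def wt_succ_def wt_dot_def wt_star_def wmax_append
         power_add[symmetric] mult.assoc[symmetric] mult_power_pred
         intro!: arg_cong[where f="power q"])
  then show ?A1 ?A2 ?A3 ?A4 ?A5 ?A6 ?A7 by blast+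
qed

end

lemma bil_expand:
  assumes "finite F" "supp x \<subseteq> F" "finite G" "supp y \<subseteq> G"
  shows "bil B x y w = (\<Sum>f\<in>F. \<Sum>g\<in>G. x f * y g * B f g w)"
proof -
  have "bil B x y w = (\<Sum>f\<in>supp x. \<Sum>g\<in>G. x f * y g * B f g w)"
    unfolding bil_def
    by (rule sum.cong[OF refl], rule sum.mono_neutral_left) (use assms in \<open>auto simp: supp_def\<close>)
  also have "\<dots> = (\<Sum>f\<in>F. \<Sum>g\<in>G. x f * y g * B f g w)"
    by (rule sum.mono_neutral_left) (use assms in \<open>auto simp: supp_def\<close>)
  finally show ?thesis .
qed

definition surj_words :: "nat \<Rightarrow> nat list set" where
  "surj_words n = {w. length w = n \<and> surjw w}"

lemma finite_surj_words: "finite (surj_words n)"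
proof (rule finite_subset)
  show "surj_words n \<subseteq> {w. set w \<subseteq> {0..n} \<and> length w = n}"
  proof (rule subsetI, rule CollectI, rule conjI)
    fix w assume w: "w \<in> surj_words n"
    then have "wmax w \<le> n"
      using card_length[of w] by (simp add: surj_words_def surjw_def)
    then show "set w \<subseteq> {0..n}" using le_wmax by fastforce
    show "length w = n" using w by (simp add: surj_words_def)
  qed
qed (rule finite_lists_length_eq, simp)

definition prod_support :: "(nat list \<Rightarrow> 'k::zero) \<Rightarrow> (nat list \<Rightarrow> 'k) \<Rightarrow> nat list set" where
  "prod_support a b = (\<Union>f\<in>supp a. \<Union>g\<in>supp b. surj_words (length f + length g))"

lemma finite_prod_support: "inST a \<Longrightarrow> inST b \<Longrightarrow> finite (prod_support a b)"
  by (auto simp: prod_support_def inST_def finite_surj_words)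

lemma wprod_in_prod_support:
  "wprod c f g w \<noteq> 0 \<Longrightarrow> f \<in> supp a \<Longrightarrow> g \<in> supp b \<Longrightarrow> w \<in> prod_support a b"
  using wprod_nonzeroD[of c f g w] by (auto simp: prod_support_def surj_words_def)

context
  fixes B :: "nat list \<Rightarrow> nat list \<Rightarrow> nat list \<Rightarrow> 'k::comm_ring_1" and c
  assumes B: "\<And>f g. f \<noteq> [] \<Longrightarrow> g \<noteq> [] \<Longrightarrow> B f g = wprod c f g"
begin

lemma supp_bil_wprod:
  assumes "inST a" "inST b"
  shows "supp (bil B a b) \<subseteq> prod_support a b"
proof
  fix w assume "w \<in> supp (bil B a b)"
  then obtain f g where fg: "f \<in> supp a" "g \<in> supp b" "a f * b g * B f g w \<noteq> 0"
    unfolding supp_def bil_def by (auto elim!: sum.not_neutral_contains_not_neutral)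
  then have "B f g w = wprod c f g w" using assms B by (simp add: inST_def)
  then have "wprod c f g w \<noteq> 0" using fg(3) by (metis mult_zero_right)
  then show "w \<in> prod_support a b" using fg(1,2) by (rule wprod_in_prod_support)
qed

end

context
  fixes B1 B2 :: "nat list \<Rightarrow> nat list \<Rightarrow> nat list \<Rightarrow> 'k::comm_ring_1" and c1 c2
  assumes B1: "\<And>f g. f \<noteq> [] \<Longrightarrow> g \<noteq> [] \<Longrightarrow> B1 f g = wprod c1 f g"
    and B2: "\<And>f g. f \<noteq> [] \<Longrightarrow> g \<noteq> [] \<Longrightarrow> B2 f g = wprod c2 f g"
    and c1: "relabel_invariant c1"
begin

lemma bil_bil_left:
  assumes a: "inST a" and b: "inST b" and c: "inST c"
  shows "bil B2 (bil B1 a b) c w = (\<Sum>f\<in>supp a. \<Sum>g\<in>supp b. \<Sum>h\<in>supp c.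
    a f * b g * c h * coeff3 (\<lambda>x y z. c1 x y * c2 (x @ y) z) f g h w)"
proof -
  have fin: "finite (supp a)" "finite (supp b)" "finite (supp c)" and
    ne: "\<And>f. f \<in> supp a \<Longrightarrow> f \<noteq> []" "\<And>g. g \<in> supp b \<Longrightarrow> g \<noteq> []" "\<And>h. h \<in> supp c \<Longrightarrow> h \<noteq> []"
    using a b c by (auto simp: inST_def)
  let ?U = "prod_support a b"
  have "bil B2 (bil B1 a b) c w = (\<Sum>u\<in>?U. \<Sum>h\<in>supp c. bil B1 a b u * c h * B2 u h w)"
    by (rule bil_expand[OF finite_prod_support[OF a b] supp_bil_wprod[OF B1 a b] fin(3) order_refl])
  also have "\<dots> = (\<Sum>h\<in>supp c. \<Sum>u\<in>?U. bil B1 a b u * c h * B2 u h w)"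
    by (rule sum.swap)
  also have "\<dots> = (\<Sum>h\<in>supp c. \<Sum>u\<in>?U. \<Sum>f\<in>supp a. \<Sum>g\<in>supp b.
      a f * b g * c h * (B1 f g u * B2 u h w))"
    unfolding bil_def sum_distrib_right by (simp add: mult_ac)
  also have "\<dots> = (\<Sum>h\<in>supp c. \<Sum>f\<in>supp a. \<Sum>g\<in>supp b. \<Sum>u\<in>?U.
      a f * b g * c h * (B1 f g u * B2 u h w))"
    by (rule sum.cong[OF refl], rule sum_commute_3)
  also have "\<dots> = (\<Sum>h\<in>supp c. \<Sum>f\<in>supp a. \<Sum>g\<in>supp b.
      a f * b g * c h * (\<Sum>u\<in>?U. B1 f g u * B2 u h w))"
    by (simp only: sum_distrib_left)
  also have "\<dots> = (\<Sum>h\<in>supp c. \<Sum>f\<in>supp a. \<Sum>g\<in>supp b.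
      a f * b g * c h * coeff3 (\<lambda>x y z. c1 x y * c2 (x @ y) z) f g h w)"
  proof (intro sum.cong refl)
    fix f g h assume fgh: "f \<in> supp a" "g \<in> supp b" "h \<in> supp c"
    then have nef: "f \<noteq> []" "g \<noteq> []" "h \<noteq> []" using ne by auto
    have "(\<Sum>u\<in>?U. B1 f g u * B2 u h w) = (\<Sum>u\<in>?U. wprod c1 f g u * B2 u h w)"
      using B1 nef by simp
    also have "\<dots> = coeff3 (\<lambda>x y z. c1 x y * c2 (x @ y) z) f g h w"
      by (rule sum_wprod_left[where B=B2, OF c1 nef finite_prod_support[OF a b]
            wprod_in_prod_support[OF _ fgh(1,2)] B2[OF _ nef(3)]])
    finally show "a f * b g * c h * (\<Sum>u\<in>?U. B1 f g u * B2 u h w)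
        = a f * b g * c h * coeff3 (\<lambda>x y z. c1 x y * c2 (x @ y) z) f g h w"
      by simp
  qed
  finally show ?thesis by (rule trans[OF _ sum_commute_3])
qed

lemma bil_bil_right:
  assumes a: "inST a" and b: "inST b" and c: "inST c"
  shows "bil B2 a (bil B1 b c) w = (\<Sum>f\<in>supp a. \<Sum>g\<in>supp b. \<Sum>h\<in>supp c.
    a f * b g * c h * coeff3 (\<lambda>x y z. c1 y z * c2 x (y @ z)) f g h w)"
proof -
  have fin: "finite (supp a)" "finite (supp b)" "finite (supp c)" and
    ne: "\<And>f. f \<in> supp a \<Longrightarrow> f \<noteq> []" "\<And>g. g \<in> supp b \<Longrightarrow> g \<noteq> []" "\<And>h. h \<in> supp c \<Longrightarrow> h \<noteq> []"
    using a b c by (auto simp: inST_def)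
  let ?U = "prod_support b c"
  have "bil B2 a (bil B1 b c) w = (\<Sum>f\<in>supp a. \<Sum>u\<in>?U. a f * bil B1 b c u * B2 f u w)"
    by (rule bil_expand[OF fin(1) order_refl finite_prod_support[OF b c] supp_bil_wprod[OF B1 b c]])
  also have "\<dots> = (\<Sum>f\<in>supp a. \<Sum>u\<in>?U. \<Sum>g\<in>supp b. \<Sum>h\<in>supp c.
      a f * b g * c h * (B1 g h u * B2 f u w))"
    unfolding bil_def sum_distrib_right sum_distrib_left by (simp add: mult_ac)
  also have "\<dots> = (\<Sum>f\<in>supp a. \<Sum>g\<in>supp b. \<Sum>h\<in>supp c. \<Sum>u\<in>?U.
      a f * b g * c h * (B1 g h u * B2 f u w))"
    by (rule sum.cong[OF refl], rule sum_commute_3)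
  also have "\<dots> = (\<Sum>f\<in>supp a. \<Sum>g\<in>supp b. \<Sum>h\<in>supp c.
      a f * b g * c h * (\<Sum>u\<in>?U. B1 g h u * B2 f u w))"
    by (simp only: sum_distrib_left)
  also have "\<dots> = (\<Sum>f\<in>supp a. \<Sum>g\<in>supp b. \<Sum>h\<in>supp c.
      a f * b g * c h * coeff3 (\<lambda>x y z. c1 y z * c2 x (y @ z)) f g h w)"
  proof (intro sum.cong refl)
    fix f g h assume fgh: "f \<in> supp a" "g \<in> supp b" "h \<in> supp c"
    then have nef: "f \<noteq> []" "g \<noteq> []" "h \<noteq> []" using ne by auto
    have "(\<Sum>u\<in>?U. B1 g h u * B2 f u w) = (\<Sum>u\<in>?U. wprod c1 g h u * B2 f u w)"
      using B1 nef by simp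
    also have "\<dots> = coeff3 (\<lambda>x y z. c1 y z * c2 x (y @ z)) f g h w"
      by (rule sum_wprod_right[where B=B2, OF c1 nef finite_prod_support[OF b c]
            wprod_in_prod_support[OF _ fgh(2,3)] B2[OF nef(1)]])
    finally show "a f * b g * c h * (\<Sum>u\<in>?U. B1 g h u * B2 f u w)
        = a f * b g * c h * coeff3 (\<lambda>x y z. c1 y z * c2 x (y @ z)) f g h w"
      by simp
  qed
  finally show ?thesis .
qed

end

lemma bil_assoc:
  assumes a: "inST a" and b: "inST b" and c: "inST c"
    and B1: "\<And>f g. f \<noteq> [] \<Longrightarrow> g \<noteq> [] \<Longrightarrow> B1 f g = wprod c1 f g"
    and B2: "\<And>f g. f \<noteq> [] \<Longrightarrow> g \<noteq> [] \<Longrightarrow> B2 f g = wprod c2 f g"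
    and B1': "\<And>f g. f \<noteq> [] \<Longrightarrow> g \<noteq> [] \<Longrightarrow> B1' f g = wprod c1' f g"
    and B2': "\<And>f g. f \<noteq> [] \<Longrightarrow> g \<noteq> [] \<Longrightarrow> B2' f g = wprod c2' f g"
    and c1: "relabel_invariant c1" and c1': "relabel_invariant c1'"
    and wt: "\<And>x y z. x \<noteq> [] \<Longrightarrow> y \<noteq> [] \<Longrightarrow> z \<noteq> [] \<Longrightarrow>
      c1 x y * c2 (x @ y) z = c1' y z * (c2' x (y @ z) :: 'k::comm_ring_1)"
  shows "bil B2 (bil B1 a b) c = bil B2' a (bil B1' b c)"
proof
  fix w
  have blocks: "coeff3 (\<lambda>x y z. c1 x y * c2 (x @ y) z) f g h w
      = coeff3 (\<lambda>x y z. c1' y z * c2' x (y @ z)) f g h w"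
    if "f \<in> supp a" "g \<in> supp b" "h \<in> supp c" for f g h
    using that a b c wt by (intro coeff3_cong) (auto simp: inST_def)
  have "bil B2 (bil B1 a b) c w = (\<Sum>f\<in>supp a. \<Sum>g\<in>supp b. \<Sum>h\<in>supp c.
      a f * b g * c h * coeff3 (\<lambda>x y z. c1 x y * c2 (x @ y) z) f g h w)"
    by (rule bil_bil_left[OF B1 B2 c1 a b c])
  also have "\<dots> = (\<Sum>f\<in>supp a. \<Sum>g\<in>supp b. \<Sum>h\<in>supp c.
      a f * b g * c h * coeff3 (\<lambda>x y z. c1' y z * c2' x (y @ z)) f g h w)"
    by (intro sum.cong refl) (simp add: blocks)
  also have "\<dots> = bil B2' a (bil B1' b c) w"
    by (rule bil_bil_right[OF B1' B2' c1' a b c, symmetric])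
  finally show "bil B2 (bil B1 a b) c w = bil B2' a (bil B1' b c) w" .
qed

lemma star_w_eq_wprod:
  assumes ne: "f \<noteq> []" "g \<noteq> []"
  shows "star_w q f g = wprod (wt_star q) f g"
proof
  fix w
  have "star_w q f g w
      = wprod (wt_prec q) f g w + q * wprod (wt_dot q) f g w + wprod (wt_succ q) f g w"
    using prec_w_eq_wprod[OF ne, of q] dot_w_eq_wprod[OF ne, of q] succ_w_eq_wprod[OF ne, of q] ne
    by (simp add: star_w_def prec_w_def dot_w_def succ_w_def)
  also have "\<dots> = wprod (wt_star q) f g w"
  proof (cases "length w = length f + length g \<and> surjw w \<and> stdw (take (length f) w) = f
      \<and> stdw (drop (length f) w) = g")
    case True
    then have "take (length f) w \<noteq> []" "drop (length f) w \<noteq> []"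
      using ne by (metis stdw_eq_Nil_iff(1))+
    then show ?thesis
      unfolding wprod_def if_P[OF True] using wt_prec_succ_dot[of _ _ q]
      by (simp add: algebra_simps)
  next
    case False
    then show ?thesis unfolding wprod_def if_not_P[OF False] by simp
  qed
  finally show "star_w q f g w = wprod (wt_star q) f g w" .
qed

lemma wprod_Nil_left: "surjw d \<Longrightarrow> wprod c [] d v = (if v = d then c [] d else 0)"
  using stdw_surjw[of v] stdw_surjw[of d] by (auto simp: wprod_def)

lemma wprod_Nil_right: "surjw b \<Longrightarrow> wprod c b [] v = (if v = b then c b [] else 0)"
  using stdw_surjw[of v] stdw_surjw[of b] by (auto simp: wprod_def)

lemma star_w_eq_wprod_surjw:
  assumes "surjw a" "surjw b"
  shows "star_w q a b = wprod (wt_star q) a b"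
proof (cases "a = [] \<or> b = []")
  case True
  then show ?thesis
    using assms by (auto simp: fun_eq_iff star_w_def wprod_Nil_left wprod_Nil_right wt_star_def
        capw_def delta_def)
qed (simp add: star_w_eq_wprod)

lemma products_eq_wprod_surjw:
  assumes "surjw b" "surjw d" "b \<noteq> [] \<or> d \<noteq> []"
  shows "succ_w q b d = wprod (wt_succ q) b d" "dot_w q b d = wprod (wt_dot q) b d"
    "prec_w q b d = wprod (wt_prec q) b d"
proof -
  have pos: "b \<noteq> [] \<Longrightarrow> 0 < wmax b" "d \<noteq> [] \<Longrightarrow> 0 < wmax d"
    using assms wmax_in[of b] wmax_in[of d] by (auto simp: surjw_def)
  show "succ_w q b d = wprod (wt_succ q) b d"
    using assms pos succ_w_eq_wprod[of b d q]
    by (auto simp: succ_w_def wprod_Nil_left wprod_Nil_right delta_def wt_succ_def fun_eq_iff)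
  show "dot_w q b d = wprod (wt_dot q) b d"
    using assms pos dot_w_eq_wprod[of b d q]
    by (auto simp: dot_w_def wprod_Nil_left wprod_Nil_right wt_dot_def fun_eq_iff)
  show "prec_w q b d = wprod (wt_prec q) b d"
    using assms pos prec_w_eq_wprod[of b d q]
    by (auto simp: prec_w_def wprod_Nil_left wprod_Nil_right delta_def wt_prec_def fun_eq_iff)
qed

lemma bil_star_w:
  assumes "inST b" "inST c"
  shows "bil (star_w q) b c = vadd (vadd (prec_q q b c) (succ_q q b c)) (smul q (dot_q q b c))"
proof
  fix w
  have "star_w q f g w = prec_w q f g w + succ_w q f g w + q * dot_w q f g w"
    if "f \<in> supp b" "g \<in> supp c" for f g
    using that assms by (auto simp: inST_def star_w_def prec_w_def succ_w_def dot_w_def)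
  then have "bil (star_w q) b c w = (\<Sum>f\<in>supp b. \<Sum>g\<in>supp c.
      b f * c g * prec_w q f g w + b f * c g * succ_w q f g w + q * (b f * c g * dot_w q f g w))"
    unfolding bil_def by (intro sum.cong refl) (simp add: algebra_simps)
  then show "bil (star_w q) b c w
      = vadd (vadd (prec_q q b c) (succ_q q b c)) (smul q (dot_q q b c)) w"
    by (simp add: vadd_def smul_def prec_q_def succ_q_def dot_q_def bil_def sum.distrib
        sum_distrib_left)
qed

theorem tridendriform_axioms:
  fixes q :: "'k::comm_ring_1"
  assumes a: "inST a" and b: "inST b" and c: "inST c"
  shows "prec_q q (prec_q q a b) c
         = prec_q q a (vadd (vadd (prec_q q b c) (succ_q q b c)) (smul q (dot_q q b c)))"
    and "prec_q q (succ_q q a b) c = succ_q q a (prec_q q b c)"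
    and "succ_q q (vadd (vadd (prec_q q a b) (succ_q q a b)) (smul q (dot_q q a b))) c
         = succ_q q a (succ_q q b c)"
    and "dot_q q (dot_q q a b) c = dot_q q a (dot_q q b c)"
    and "dot_q q (succ_q q a b) c = succ_q q a (dot_q q b c)"
    and "dot_q q (prec_q q a b) c = dot_q q a (succ_q q b c)"
    and "prec_q q (dot_q q a b) c = dot_q q a (prec_q q b c)"
proof -
  note assoc = bil_assoc[OF a b c]
  note P = prec_w_eq_wprod[of _ _ q] and S = succ_w_eq_wprod[of _ _ q]
    and D = dot_w_eq_wprod[of _ _ q] and T = star_w_eq_wprod[of _ _ q]
  note inv = relabel_invariant_weights[of q]
  show "prec_q q (prec_q q a b) c
      = prec_q q a (vadd (vadd (prec_q q b c) (succ_q q b c)) (smul q (dot_q q b c)))"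
    unfolding bil_star_w[OF b c, symmetric] unfolding prec_q_def
    by (rule assoc[OF P P T P inv(3,4)], assumption+) (rule wt_assoc(1))
  show "prec_q q (succ_q q a b) c = succ_q q a (prec_q q b c)"
    unfolding prec_q_def succ_q_def
    by (rule assoc[OF S P P S inv(1,3)], assumption+) (rule wt_assoc(2))
  show "succ_q q (vadd (vadd (prec_q q a b) (succ_q q a b)) (smul q (dot_q q a b))) c
      = succ_q q a (succ_q q b c)"
    unfolding bil_star_w[OF a b, symmetric] unfolding succ_q_def
    by (rule assoc[OF T S S S inv(4,1)], assumption+) (rule wt_assoc(3))
  show "dot_q q (dot_q q a b) c = dot_q q a (dot_q q b c)"
    unfolding dot_q_def
    by (rule assoc[OF D D D D inv(2,2)], assumption+) (rule wt_assoc(4))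
  show "dot_q q (succ_q q a b) c = succ_q q a (dot_q q b c)"
    unfolding dot_q_def succ_q_def
    by (rule assoc[OF S D D S inv(1,2)], assumption+) (rule wt_assoc(5))
  show "dot_q q (prec_q q a b) c = dot_q q a (succ_q q b c)"
    unfolding dot_q_def succ_q_def prec_q_def
    by (rule assoc[OF P D S D inv(3,1)], assumption+) (rule wt_assoc(6))
  show "prec_q q (dot_q q a b) c = dot_q q a (prec_q q b c)"
    unfolding dot_q_def prec_q_def
    by (rule assoc[OF D P P D inv(2,3)], assumption+) (rule wt_assoc(7))
qed

section \<open>The coproduct\<close>

abbreviation vals_le :: "nat \<Rightarrow> nat list \<Rightarrow> nat list" where
  "vals_le t w \<equiv> filter (\<lambda>y. y \<le> t) w"

abbreviation vals_gt :: "nat \<Rightarrow> nat list \<Rightarrow> nat list" where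
  "vals_gt t w \<equiv> filter (\<lambda>y. \<not> y \<le> t) w"

definition cop_term :: "nat list \<Rightarrow> nat \<Rightarrow> nat list \<times> nat list" where
  "cop_term f j = (corestr f {1..j}, stdw (corestr f {j+1..wmax f}))"

lemma cop_w_eq_sum: "cop_w f p = (\<Sum>j\<in>{0..wmax f}. if p = cop_term f j then 1 else 0)"
  by (cases p) (simp add: cop_w_def cop_term_def)

lemma sum_cop_w:
  assumes "finite P" "cop_term f ` {0..wmax f} \<subseteq> P"
  shows "(\<Sum>p\<in>P. cop_w f p * F p) = (\<Sum>j\<in>{0..wmax f}. F (cop_term f j) :: 'k::comm_ring_1)"
proof -
  have "(\<Sum>p\<in>P. cop_w f p * F p) = (\<Sum>p\<in>P. \<Sum>j\<in>{0..wmax f}. if p = cop_term f j then F p else 0)"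
    unfolding cop_w_eq_sum sum_distrib_right by (intro sum.cong refl) auto
  also have "\<dots> = (\<Sum>j\<in>{0..wmax f}. \<Sum>p\<in>P. if p = cop_term f j then F p else 0)"
    by (rule sum.swap)
  also have "\<dots> = (\<Sum>j\<in>{0..wmax f}. F (cop_term f j))"
  proof (intro sum.cong refl)
    fix j assume "j \<in> {0..wmax f}"
    then have "cop_term f j \<in> P" using assms(2) by auto
    then show "(\<Sum>p\<in>P. if p = cop_term f j then F p else 0) = F (cop_term f j)"
      by (simp add: sum.delta[OF assms(1)])
  qed
  finally show ?thesis .
qed

lemma supp_cop_w: "supp (cop_w f :: _ \<Rightarrow> 'k::comm_ring_1) \<subseteq> cop_term f ` {0..wmax f}"
proof
  fix p assume "p \<in> supp (cop_w f :: _ \<Rightarrow> 'k)"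
  then have "(\<Sum>j\<in>{0..wmax f}. if p = cop_term f j then 1 else 0 :: 'k) \<noteq> 0"
    by (simp add: supp_def cop_w_eq_sum)
  then obtain j where "j \<in> {0..wmax f}" "(if p = cop_term f j then 1 else 0 :: 'k) \<noteq> 0"
    by (rule sum.not_neutral_contains_not_neutral)
  then show "p \<in> cop_term f ` {0..wmax f}" by (auto split: if_splits)
qed

definition cop_support :: "(nat list \<Rightarrow> 'k::zero) \<Rightarrow> (nat list \<times> nat list) set" where
  "cop_support x = (\<Union>f\<in>supp x. cop_term f ` {0..wmax f})"

lemma finite_cop_support: "finite (supp x) \<Longrightarrow> finite (cop_support x)"
  unfolding cop_support_def by auto

lemma cop_term_in_cop_support: "f \<in> supp x \<Longrightarrow> cop_term f ` {0..wmax f} \<subseteq> cop_support x"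
  unfolding cop_support_def by auto

lemma supp_cop: "supp (cop x :: _ \<Rightarrow> 'k::comm_ring_1) \<subseteq> cop_support x"
proof
  fix p assume "p \<in> supp (cop x :: _ \<Rightarrow> 'k)"
  then have "(\<Sum>f\<in>supp x. x f * cop_w f p) \<noteq> (0::'k)" by (simp add: supp_def cop_def)
  then obtain f where "f \<in> supp x" "x f * cop_w f p \<noteq> (0::'k)"
    by (rule sum.not_neutral_contains_not_neutral)
  then have "f \<in> supp x" "p \<in> supp (cop_w f :: _ \<Rightarrow> 'k)" by (auto simp: supp_def)
  then show "p \<in> cop_support x" using supp_cop_w[of f] unfolding cop_support_def by auto
qed

lemma corestr_le: "surjw f \<Longrightarrow> corestr f {1..i} = vals_le i f"
  unfolding corestr_def surjw_def by (intro filter_cong) auto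

lemma corestr_gt: "surjw f \<Longrightarrow> corestr f {i+1..wmax f} = vals_gt i f"
  unfolding corestr_def surjw_def by (intro filter_cong) auto

lemma corestr_all: "surjw f \<Longrightarrow> corestr f {1..wmax f} = f"
  using corestr_le[of f "wmax f"] by (simp add: filter_id_conv le_wmax)

lemma cop_unit: "cop (delta [] :: nat list \<Rightarrow> 'k::comm_ring_1) = tens (delta []) (delta [])"
proof
  fix p :: "nat list \<times> nat list"
  have "supp (delta [] :: nat list \<Rightarrow> 'k) = {[]}" by (auto simp: supp_def delta_def)
  then show "cop (delta [] :: nat list \<Rightarrow> 'k) p = tens (delta []) (delta []) p"
    by (cases p) (simp add: cop_def cop_w_def delta_def tens_def corestr_def stdw_def)
qed

lemma cop_w_Nil_left:
  assumes f: "surjw f"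
  shows "cop_w f ([], v) = (if v = f then 1 else (0::'k::comm_ring_1))"
proof -
  have "cop_w f ([], v) = (\<Sum>j\<in>{0..wmax f}. if j = 0 \<and> v = f then 1 else (0::'k))"
    unfolding cop_w_eq_sum
  proof (intro sum.cong refl)
    fix j assume j: "j \<in> {0..wmax f}"
    have "corestr f {1..j} = [] \<longleftrightarrow> j = 0 \<or> f = []"
    proof
      assume "corestr f {1..j} = []"
      then have "\<forall>x\<in>set f. \<not> x \<le> j" using corestr_le[OF f] by (simp add: filter_empty_conv)
      moreover have "f \<noteq> [] \<Longrightarrow> 1 \<in> set f"
        using f wmax_in[of f] by (cases "wmax f = 0") (auto simp: surjw_def)
      ultimately show "j = 0 \<or> f = []" by (cases j) auto
    qed (use corestr_le[OF f] f in \<open>auto simp: filter_empty_conv surjw_def\<close>)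
    then show "(if ([], v) = cop_term f j then 1 else (0::'k)) = (if j = 0 \<and> v = f then 1 else 0)"
      using corestr_all[OF f] stdw_surjw[OF f] j by (auto simp: cop_term_def)
  qed
  also have "\<dots> = (if v = f then 1 else 0)" by (simp add: sum.delta)
  finally show ?thesis .
qed

lemma cop_w_Nil_right:
  assumes f: "surjw f"
  shows "cop_w f (u, []) = (if u = f then 1 else (0::'k::comm_ring_1))"
proof -
  have "cop_w f (u, []) = (\<Sum>j\<in>{0..wmax f}. if j = wmax f \<and> u = f then 1 else (0::'k))"
    unfolding cop_w_eq_sum
  proof (intro sum.cong refl)
    fix j assume j: "j \<in> {0..wmax f}"
    have "corestr f {j+1..wmax f} = [] \<longleftrightarrow> j = wmax f"
    proof
      assume "corestr f {j+1..wmax f} = []"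
      then have "\<forall>x\<in>set f. x \<le> j" using corestr_gt[OF f] by (simp add: filter_empty_conv)
      moreover have "j < wmax f \<Longrightarrow> wmax f \<in> set f" using f by (auto simp: surjw_def)
      ultimately show "j = wmax f" using j by force
    qed (auto simp: corestr_def filter_empty_conv)
    then have "[] = stdw (corestr f {Suc j..wmax f}) \<longleftrightarrow> j = wmax f" by simp
    then show "(if (u, []) = cop_term f j then 1 else (0::'k))
        = (if j = wmax f \<and> u = f then 1 else 0)"
      using corestr_all[OF f] j by (auto simp: cop_term_def)
  qed
  also have "\<dots> = (if u = f then 1 else 0)" by (simp add: sum.delta)
  finally show ?thesis .
qed

lemma sum_delta_Nil:
  assumes "finite {u. T u \<noteq> 0}"
  shows "(\<Sum>u\<in>{u. T u \<noteq> 0}. delta [] u * T u) = (T [] :: 'k::comm_ring_1)"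
proof -
  have "(\<Sum>u\<in>{u. T u \<noteq> 0}. delta [] u * T u) = (\<Sum>u\<in>{u. T u \<noteq> 0}. if u = [] then T u else 0)"
    by (intro sum.cong) (auto simp: delta_def)
  also have "\<dots> = T []" by (simp add: sum.delta[OF assms])
  finally show ?thesis .
qed

lemma finite_supp_slices:
  assumes "finite (supp T)"
  shows "finite {u. T (u, v) \<noteq> 0}" "finite {v. T (u, v) \<noteq> 0}"
proof -
  have "{u. T (u, v) \<noteq> 0} \<subseteq> fst ` supp T" "{v. T (u, v) \<noteq> 0} \<subseteq> snd ` supp T"
    by (force simp: supp_def)+
  then show "finite {u. T (u, v) \<noteq> 0}" "finite {v. T (u, v) \<noteq> 0}"
    using assms by (meson finite_imageI finite_subset)+
qed

lemma cop_counit: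
  assumes x: "inSTp (x :: nat list \<Rightarrow> 'k::comm_ring_1)"
  shows "eps_id (cop x) = x" "id_eps (cop x) = x"
proof -
  have fx: "finite (supp x)" and sx: "\<And>f. f \<in> supp x \<Longrightarrow> surjw f"
    using x by (auto simp: inSTp_def)
  have fc: "finite (supp (cop x))"
    using finite_subset[OF supp_cop finite_cop_support[OF fx]] .
  have pick: "(\<Sum>f\<in>supp x. x f * (if v = f then 1 else 0)) = x v" for v
    using fx by (cases "v \<in> supp x") (auto simp: supp_def if_distrib sum.delta cong: if_cong)
  show "eps_id (cop x) = x"
  proof
    fix v
    have "eps_id (cop x) v = cop x ([], v)"
      unfolding eps_id_def by (rule sum_delta_Nil[OF finite_supp_slices(1)[OF fc]])
    also have "\<dots> = x v"
      unfolding cop_def using pick by (simp add: cop_w_Nil_left sx)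
    finally show "eps_id (cop x) v = x v" .
  qed
  show "id_eps (cop x) = x"
  proof
    fix u
    have "id_eps (cop x) u = cop x (u, [])"
      unfolding id_eps_def by (rule sum_delta_Nil[OF finite_supp_slices(2)[OF fc]])
    also have "\<dots> = x u"
      unfolding cop_def using pick by (simp add: cop_w_Nil_right sx)
    finally show "id_eps (cop x) u = x u" .
  qed
qed

lemma capw_vals_le_gt:
  "capw h k = capw (vals_le t h) (vals_le t k) + capw (vals_gt t h) (vals_gt t k)"
proof -
  have "set h \<inter> set k
      = (set (vals_le t h) \<inter> set (vals_le t k)) \<union> (set (vals_gt t h) \<inter> set (vals_gt t k))"
    by auto
  moreover have
    "(set (vals_le t h) \<inter> set (vals_le t k)) \<inter> (set (vals_gt t h) \<inter> set (vals_gt t k)) = {}"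
    by auto
  ultimately show ?thesis unfolding capw_def by (simp add: card_Un_disjoint)
qed

lemma surjw_vals_le: "surjw f \<Longrightarrow> surjw (vals_le i f)"
proof -
  assume "surjw f"
  then have "set (vals_le i f) = {1..min i (wmax f)}" by (auto simp: surjw_def)
  then show ?thesis using surjw_iff_interval by blast
qed

lemma wmax_vals_le: "wmax (vals_le t w) \<le> t"
  by (rule wmax_leI) auto

lemma wmax_vals_gt: "vals_gt t w \<noteq> [] \<Longrightarrow> t < wmax (vals_gt t w)"
  using wmax_in[of "vals_gt t w"] by auto

lemma wmax_vals_le_gt:
  "wmax w = (if vals_gt t w = [] then wmax (vals_le t w) else wmax (vals_gt t w))"
proof -
  have "set w = set (vals_le t w @ vals_gt t w)" by auto
  then have "wmax w = max (wmax (vals_le t w)) (wmax (vals_gt t w))"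
    unfolding wmax_append[symmetric] by (simp add: wmax_def)
  then show ?thesis using wmax_vals_le[of t w] wmax_vals_gt[of t w] by auto
qed

context
  fixes t :: nat and h k :: "nat list" and q :: "'k::comm_ring_1"
  assumes upper_ne: "vals_gt t h \<noteq> [] \<or> vals_gt t k \<noteq> []"
begin

lemma wt_succ_cut:
  "wt_succ q h k = q ^ capw (vals_le t h) (vals_le t k) * wt_succ q (vals_gt t h) (vals_gt t k)"
  using upper_ne capw_vals_le_gt[of h k t] wmax_vals_le_gt[of h t] wmax_vals_le_gt[of k t]
    wmax_vals_le[of t h] wmax_vals_le[of t k] wmax_vals_gt[of t h] wmax_vals_gt[of t k]
  by (auto simp: wt_succ_def power_add)

lemma wt_prec_cut:
  "wt_prec q h k = q ^ capw (vals_le t h) (vals_le t k) * wt_prec q (vals_gt t h) (vals_gt t k)"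
  using upper_ne capw_vals_le_gt[of h k t] wmax_vals_le_gt[of h t] wmax_vals_le_gt[of k t]
    wmax_vals_le[of t h] wmax_vals_le[of t k] wmax_vals_gt[of t h] wmax_vals_gt[of t k]
  by (auto simp: wt_prec_def power_add)

lemma wt_dot_cut:
  "wt_dot q h k = q ^ capw (vals_le t h) (vals_le t k) * wt_dot q (vals_gt t h) (vals_gt t k)"
proof (cases "vals_gt t h \<noteq> [] \<and> vals_gt t k \<noteq> [] \<and> wmax (vals_gt t h) = wmax (vals_gt t k)")
  case True
  then have "0 < capw (vals_gt t h) (vals_gt t k)" by (simp add: capw_pos)
  then have "q ^ (capw (vals_le t h) (vals_le t k) + capw (vals_gt t h) (vals_gt t k) - Suc 0)
      = q ^ capw (vals_le t h) (vals_le t k) * q ^ (capw (vals_gt t h) (vals_gt t k) - Suc 0)"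
    by (simp add: power_add[symmetric])
  then show ?thesis
    using True capw_vals_le_gt[of h k t] wmax_vals_le_gt[of h t] wmax_vals_le_gt[of k t]
    by (simp add: wt_dot_def)
next
  case False
  then show ?thesis
    using upper_ne wmax_vals_le_gt[of h t] wmax_vals_le_gt[of k t]
      wmax_vals_le[of t h] wmax_vals_le[of t k] wmax_vals_gt[of t h] wmax_vals_gt[of t k]
    by (auto simp: wt_dot_def)
qed

end

context
  fixes t :: nat and h k :: "nat list" and q :: "'k::comm_ring_1"
  assumes gt: "\<forall>y\<in>set (h @ k). t < y" and ne: "h \<noteq> [] \<or> k \<noteq> []"
begin

lemma wmax_shift: "wmax (map (\<lambda>y. y - t) h) = wmax h - t" "wmax (map (\<lambda>y. y - t) k) = wmax k - t"
  and capw_shift: "capw (map (\<lambda>y. y - t) h) (map (\<lambda>y. y - t) k) = capw h k"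
proof -
  have mono: "strict_mono_on (set (h @ k)) (\<lambda>y. y - t)"
  proof (rule strict_mono_onI)
    fix r s assume "r \<in> set (h @ k)" "s \<in> set (h @ k)" "r < s"
    then show "r - t < s - t" using gt by (meson diff_less_mono less_imp_le)
  qed
  show "wmax (map (\<lambda>y. y - t) h) = wmax h - t" "wmax (map (\<lambda>y. y - t) k) = wmax k - t"
    using wmax_map_strict_mono[OF monotone_on_subset[OF mono]]
    by (cases "h = []"; cases "k = []"; simp)+
  show "capw (map (\<lambda>y. y - t) h) (map (\<lambda>y. y - t) k) = capw h k"
    by (rule capw_map_strict_mono[OF mono])
qed

lemma weights_shift:
  "wt_succ q (map (\<lambda>y. y - t) h) (map (\<lambda>y. y - t) k) = wt_succ q h k"
  "wt_dot q (map (\<lambda>y. y - t) h) (map (\<lambda>y. y - t) k) = wt_dot q h k"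
  "wt_prec q (map (\<lambda>y. y - t) h) (map (\<lambda>y. y - t) k) = wt_prec q h k"
proof -
  have "h = [] \<or> t < wmax h" "k = [] \<or> t < wmax k"
    using gt wmax_in[of h] wmax_in[of k] by auto
  then show "wt_succ q (map (\<lambda>y. y - t) h) (map (\<lambda>y. y - t) k) = wt_succ q h k"
    "wt_dot q (map (\<lambda>y. y - t) h) (map (\<lambda>y. y - t) k) = wt_dot q h k"
    "wt_prec q (map (\<lambda>y. y - t) h) (map (\<lambda>y. y - t) k) = wt_prec q h k"
    using ne by (auto simp: wt_succ_def wt_dot_def wt_prec_def wmax_shift capw_shift)
qed

end

section \<open>Compatibility of the coproduct with the products\<close>

definition compat_term :: "('k::comm_ring_1 \<Rightarrow> nat list \<Rightarrow> nat list \<Rightarrow> nat list \<Rightarrow> 'k) \<Rightarrow> 'k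
    \<Rightarrow> nat list \<Rightarrow> nat list \<Rightarrow> nat list \<Rightarrow> nat list \<Rightarrow> nat list \<times> nat list \<Rightarrow> 'k" where
  "compat_term opw q a b c d p = (if b = [] \<and> d = [] then tens (opw q a c) (delta []) p
     else tens (star_w q a c) (opw q b d) p)"

definition compat_sum :: "('k::comm_ring_1 \<Rightarrow> nat list \<Rightarrow> nat list \<Rightarrow> nat list \<Rightarrow> 'k) \<Rightarrow> 'k
    \<Rightarrow> nat list \<Rightarrow> nat list \<Rightarrow> nat list \<times> nat list \<Rightarrow> 'k" where
  "compat_sum opw q f g p = (\<Sum>i\<in>{0..wmax f}. \<Sum>j\<in>{0..wmax g}.
     compat_term opw q (fst (cop_term f i)) (snd (cop_term f i))
       (fst (cop_term g j)) (snd (cop_term g j)) p)"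

text \<open>The properties of the weight c of a product opw, extended by the unit conventions, that
  make the coproduct compatible with opw.\<close>

locale cut_weight =
  fixes opw :: "'k::comm_ring_1 \<Rightarrow> nat list \<Rightarrow> nat list \<Rightarrow> nat list \<Rightarrow> 'k" and q :: 'k
    and c :: "nat list \<Rightarrow> nat list \<Rightarrow> 'k"
  assumes opw_eq_wprod: "f \<noteq> [] \<Longrightarrow> g \<noteq> [] \<Longrightarrow> opw q f g = wprod c f g"
    and opw_Nil_left: "surjw g \<Longrightarrow> g \<noteq> [] \<Longrightarrow> opw q [] g = wprod c [] g"
    and opw_Nil_right: "surjw f \<Longrightarrow> f \<noteq> [] \<Longrightarrow> opw q f [] = wprod c f []"
    and weight_cut: "vals_gt t h \<noteq> [] \<or> vals_gt t k \<noteq> [] \<Longrightarrow>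
      c h k = q ^ capw (vals_le t h) (vals_le t k) * c (vals_gt t h) (vals_gt t k)"
    and weight_shift: "\<forall>y\<in>set (h @ k). t < y \<Longrightarrow> h \<noteq> [] \<or> k \<noteq> [] \<Longrightarrow>
      c (map (\<lambda>y. y - t) h) (map (\<lambda>y. y - t) k) = c h k"

lemma (in cut_weight) opw_eq_wprod_surjw:
  "surjw f \<Longrightarrow> surjw g \<Longrightarrow> f \<noteq> [] \<or> g \<noteq> [] \<Longrightarrow> opw q f g = wprod c f g"
  using opw_eq_wprod opw_Nil_left opw_Nil_right by (cases "f = []"; cases "g = []") auto

lemma cut_weight_succ: "cut_weight succ_w q (wt_succ q)"
  and cut_weight_dot: "cut_weight dot_w q (wt_dot q)"
  and cut_weight_prec: "cut_weight prec_w q (wt_prec q)"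
  by (unfold_locales; simp add: succ_w_eq_wprod dot_w_eq_wprod prec_w_eq_wprod
      products_eq_wprod_surjw wt_succ_cut wt_dot_cut wt_prec_cut weights_shift)+

fun merge_by :: "(nat \<Rightarrow> bool) \<Rightarrow> nat list \<Rightarrow> nat list \<Rightarrow> nat list \<Rightarrow> nat list" where
  "merge_by P [] xs ys = []"
| "merge_by P (z # zs) xs ys =
    (if P z then hd xs # merge_by P zs (tl xs) ys else hd ys # merge_by P zs xs (tl ys))"

lemma merge_by_filter:
  "merge_by P zs (map \<alpha> (filter P zs)) (map \<beta> (filter (\<lambda>z. \<not> P z) zs))
    = map (\<lambda>z. if P z then \<alpha> z else \<beta> z) zs"
  by (induction zs) auto

text \<open>Inverse to cutting a word at t = wmax u: the letters of f up to i and of g up to j are read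
  off u, the others off v shifted by t.\<close>

definition recombine :: "nat list \<Rightarrow> nat list \<Rightarrow> nat \<Rightarrow> nat \<Rightarrow> nat list \<Rightarrow> nat list \<Rightarrow> nat list" where
  "recombine f g i j u v = (let t = wmax u; m = length (vals_le i f); n = length (vals_gt i f) in
     merge_by (\<lambda>x. x \<le> i) f (take m u) (map (\<lambda>y. y + t) (take n v))
     @ merge_by (\<lambda>x. x \<le> j) g (drop m u) (map (\<lambda>y. y + t) (drop n v)))"

lemma rank_in_map_cut:
  fixes t :: nat
  assumes "strict_mono_on (set x) \<gamma>" "set (vals_le k x) = {1..m}"
    and "\<And>z. z \<in> set x \<Longrightarrow> \<gamma> z \<le> t \<longleftrightarrow> z \<le> k"
  shows "rank_in (map \<gamma> x) t = m"
proof -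
  have "{y \<in> set (map \<gamma> x). y \<le> t} = \<gamma> ` set (vals_le k x)"
    using assms(3) by auto
  then have "rank_in (map \<gamma> x) t = card (\<gamma> ` set (vals_le k x))"
    by (simp add: rank_in_def)
  also have "\<dots> = card (set (vals_le k x))"
    by (rule card_image, rule inj_on_subset[OF strict_mono_on_imp_inj_on[OF assms(1)]]) auto
  also have "\<dots> = m"
    by (simp only: assms(2) card_atLeastAtMost)
  finally show ?thesis .
qed

text \<open>A summand w = map \<alpha> f @ map \<beta> g of a product of f and g, cut at the value t; this cuts
  f at i and g at j.\<close>

locale word_cut =
  fixes f g :: "nat list" and \<alpha> \<beta> :: "nat \<Rightarrow> nat" and i j t N :: nat
  assumes surj_f: "surjw f" and surj_g: "surjw g"
    and mono_\<alpha>: "strict_mono_on (set f) \<alpha>" and mono_\<beta>: "strict_mono_on (set g) \<beta>"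
    and i_le: "i \<le> wmax f" and j_le: "j \<le> wmax g"
    and cut_\<alpha>: "\<And>z. z \<in> set f \<Longrightarrow> \<alpha> z \<le> t \<longleftrightarrow> z \<le> i"
    and cut_\<beta>: "\<And>z. z \<in> set g \<Longrightarrow> \<beta> z \<le> t \<longleftrightarrow> z \<le> j"
    and set_w: "set (map \<alpha> f @ map \<beta> g) = {1..N}"
    and t_le: "t \<le> N"
begin

abbreviation "fl \<equiv> vals_le i f"
abbreviation "fh \<equiv> vals_gt i f"
abbreviation "gl \<equiv> vals_le j g"
abbreviation "gh \<equiv> vals_gt j g"

definition "w = map \<alpha> f @ map \<beta> g"
definition "u = map \<alpha> fl @ map \<beta> gl"
definition "v = map (\<lambda>z. \<alpha> z - t) fh @ map (\<lambda>z. \<beta> z - t) gh"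

lemma set_f: "set f = {1..wmax f}" and set_g: "set g = {1..wmax g}"
  using surj_f surj_g by (simp_all add: surjw_def)

lemma set_fl: "set fl = {1..i}" and set_gl: "set gl = {1..j}"
  using set_f set_g i_le j_le by auto

lemma surjw_fl: "surjw fl" and surjw_gl: "surjw gl"
  using set_fl set_gl surjw_iff_interval by blast+

lemma vals_le_map_\<alpha>: "vals_le t (map \<alpha> f) = map \<alpha> fl"
  unfolding filter_map using cut_\<alpha> by (auto intro!: arg_cong[where f="map \<alpha>"] filter_cong)

lemma vals_gt_map_\<alpha>: "vals_gt t (map \<alpha> f) = map \<alpha> fh"
  unfolding filter_map using cut_\<alpha> by (auto intro!: arg_cong[where f="map \<alpha>"] filter_cong)

lemma vals_le_map_\<beta>: "vals_le t (map \<beta> g) = map \<beta> gl"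
  unfolding filter_map using cut_\<beta> by (auto intro!: arg_cong[where f="map \<beta>"] filter_cong)

lemma vals_gt_map_\<beta>: "vals_gt t (map \<beta> g) = map \<beta> gh"
  unfolding filter_map using cut_\<beta> by (auto intro!: arg_cong[where f="map \<beta>"] filter_cong)

lemma upper_gt_\<alpha>: "z \<in> set fh \<Longrightarrow> t < \<alpha> z"
  using cut_\<alpha>[of z] by simp

lemma upper_gt_\<beta>: "z \<in> set gh \<Longrightarrow> t < \<beta> z"
  using cut_\<beta>[of z] by simp

lemma surjw_w: "surjw w" and wmax_w: "wmax w = N"
  using set_w surjw_iff_interval[of w] by (auto simp: w_def surjw_def)

lemma corestr_w_lower: "corestr w {1..t} = u"
  using corestr_le[OF surjw_w, of t] vals_le_map_\<alpha> vals_le_map_\<beta> by (simp add: w_def u_def)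

lemma corestr_w_upper: "corestr w {t+1..wmax w} = map \<alpha> fh @ map \<beta> gh"
  using corestr_gt[OF surjw_w, of t] vals_gt_map_\<alpha> vals_gt_map_\<beta> by (simp add: w_def)

lemma set_upper: "set (map \<alpha> fh @ map \<beta> gh) = {t+1..N}"
proof -
  have "set (map \<alpha> fh @ map \<beta> gh) = set (vals_gt t w)"
    using vals_gt_map_\<alpha> vals_gt_map_\<beta> by (simp add: w_def)
  also have "\<dots> = {t+1..N}" using set_w by (auto simp: w_def)
  finally show ?thesis .
qed

lemma stdw_corestr_w_upper: "stdw (corestr w {t+1..wmax w}) = v"
  unfolding corestr_w_upper stdw_shift[OF set_upper] by (simp add: v_def)

lemma set_u: "set u = {1..t}"
proof -
  have "set u = set (vals_le t w)"
    using vals_le_map_\<alpha> vals_le_map_\<beta> by (simp add: w_def u_def)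
  also have "\<dots> = {1..t}" using set_w t_le by (auto simp: w_def)
  finally show ?thesis .
qed

lemma surjw_u: "surjw u" and wmax_u: "wmax u = t"
  using set_u surjw_iff_interval[of u] by (auto simp: surjw_def)

lemma surjw_v: "surjw v"
  using stdw_corestr_w_upper surjw_stdw by metis

lemma rank_in_cut: "rank_in (map \<alpha> f) t = i" "rank_in (map \<beta> g) t = j"
  using rank_in_map_cut[OF mono_\<alpha> set_fl cut_\<alpha>] rank_in_map_cut[OF mono_\<beta> set_gl cut_\<beta>] by simp_all

lemma stdw_map_\<alpha>: "stdw (map \<alpha> f) = f" and stdw_map_\<beta>: "stdw (map \<beta> g) = g"
  using stdw_map_strict_mono[OF mono_\<alpha>] stdw_map_strict_mono[OF mono_\<beta>]
    stdw_surjw[OF surj_f] stdw_surjw[OF surj_g] by simp_all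

lemma wprod_w: "wprod c f g w = c (map \<alpha> f) (map \<beta> g)"
  using surjw_w stdw_map_\<alpha> stdw_map_\<beta> by (simp add: wprod_def w_def)

lemma recombine_u_v: "recombine f g i j u v = w"
proof -
  have "take (length fl) u = map \<alpha> fl" "drop (length fl) u = map \<beta> gl"
    by (simp_all add: u_def)
  moreover have "map (\<lambda>y. y + t) (take (length fh) v) = map (\<lambda>z. \<alpha> z - t + t) fh"
    "map (\<lambda>y. y + t) (drop (length fh) v) = map (\<lambda>z. \<beta> z - t + t) gh"
    by (simp_all add: v_def)
  moreover have "map (\<lambda>z. \<alpha> z - t + t) fh = map \<alpha> fh" "map (\<lambda>z. \<beta> z - t + t) gh = map \<beta> gh"
    by (intro map_cong refl, metis upper_gt_\<alpha> upper_gt_\<beta> le_add_diff_inverse2 less_imp_le)+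
  ultimately show ?thesis
    unfolding recombine_def Let_def wmax_u
    using merge_by_filter[of "\<lambda>x. x \<le> i" f \<alpha> \<alpha>] merge_by_filter[of "\<lambda>x. x \<le> j" g \<beta> \<beta>]
    by (simp add: w_def)
qed

lemma cop_term_f: "cop_term f i = (fl, stdw fh)" and cop_term_g: "cop_term g j = (gl, stdw gh)"
  unfolding cop_term_def corestr_le[OF surj_f] corestr_gt[OF surj_f]
    corestr_le[OF surj_g] corestr_gt[OF surj_g] by simp_all

lemma mono_shift_\<alpha>: "strict_mono_on (set fh) (\<lambda>z. \<alpha> z - t)"
  and mono_shift_\<beta>: "strict_mono_on (set gh) (\<lambda>z. \<beta> z - t)"
proof -
  show "strict_mono_on (set fh) (\<lambda>z. \<alpha> z - t)"
  proof (rule strict_mono_onI)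
    fix x y assume "x \<in> set fh" "y \<in> set fh" "x < y"
    then show "\<alpha> x - t < \<alpha> y - t"
      using strict_mono_onD[OF mono_\<alpha>] upper_gt_\<alpha>
      by (meson diff_less_mono filter_is_subset less_imp_le subsetD)
  qed
  show "strict_mono_on (set gh) (\<lambda>z. \<beta> z - t)"
  proof (rule strict_mono_onI)
    fix x y assume "x \<in> set gh" "y \<in> set gh" "x < y"
    then show "\<beta> x - t < \<beta> y - t"
      using strict_mono_onD[OF mono_\<beta>] upper_gt_\<beta>
      by (meson diff_less_mono filter_is_subset less_imp_le subsetD)
  qed
qed

end

lemma word_cut_ranks:
  assumes f: "surjw f" and g: "surjw g"
    and mono: "strict_mono_on (set f) \<alpha>" "strict_mono_on (set g) \<beta>"
    and w: "surjw (map \<alpha> f @ map \<beta> g)" and t: "t \<le> wmax (map \<alpha> f @ map \<beta> g)"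
  shows "word_cut f g \<alpha> \<beta> (rank_in (map \<alpha> f) t) (rank_in (map \<beta> g) t) t (wmax (map \<alpha> f @ map \<beta> g))"
proof
  have "rank_in (map \<alpha> f) t \<le> card (set (map \<alpha> f))" "rank_in (map \<beta> g) t \<le> card (set (map \<beta> g))"
    by (rule rank_in_le_card)+
  then show "rank_in (map \<alpha> f) t \<le> wmax f" "rank_in (map \<beta> g) t \<le> wmax g"
    using card_image[OF strict_mono_on_imp_inj_on[OF mono(1)]]
      card_image[OF strict_mono_on_imp_inj_on[OF mono(2)]] f g by (simp_all add: surjw_def)
  show "\<alpha> z \<le> t \<longleftrightarrow> z \<le> rank_in (map \<alpha> f) t" if "z \<in> set f" for z
    using rank_in_le_iff[of "\<alpha> z" "map \<alpha> f" t] rank_in_map[OF mono(1) that] rank_in_surjw[OF f that]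
      that by simp
  show "\<beta> z \<le> t \<longleftrightarrow> z \<le> rank_in (map \<beta> g) t" if "z \<in> set g" for z
    using rank_in_le_iff[of "\<beta> z" "map \<beta> g" t] rank_in_map[OF mono(2) that] rank_in_surjw[OF g that]
      that by simp
qed (use f g mono w t in \<open>simp_all add: surjw_def\<close>)

lemma (in word_cut) wprod_w_cut:
  assumes "cut_weight opw q c" and upper: "fh \<noteq> [] \<or> gh \<noteq> []"
  shows "wprod c f g w
    = q ^ capw (map \<alpha> fl) (map \<beta> gl) * c (map (\<lambda>z. \<alpha> z - t) fh) (map (\<lambda>z. \<beta> z - t) gh)"
proof -
  interpret cut_weight opw q c by fact
  have "vals_gt t (map \<alpha> f) \<noteq> [] \<or> vals_gt t (map \<beta> g) \<noteq> []"
    using upper by (simp only: vals_gt_map_\<alpha> vals_gt_map_\<beta> map_is_Nil_conv)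
  from weight_cut[OF this]
  have "wprod c f g w = q ^ capw (map \<alpha> fl) (map \<beta> gl) * c (map \<alpha> fh) (map \<beta> gh)"
    unfolding wprod_w by (simp only: vals_le_map_\<alpha> vals_le_map_\<beta> vals_gt_map_\<alpha> vals_gt_map_\<beta>)
  moreover have "\<forall>y\<in>set (map \<alpha> fh @ map \<beta> gh). t < y"
    using upper_gt_\<alpha> upper_gt_\<beta> by (auto simp only: set_append set_map Un_iff image_iff)
  then have "c (map \<alpha> fh) (map \<beta> gh) = c (map (\<lambda>z. \<alpha> z - t) fh) (map (\<lambda>z. \<beta> z - t) gh)"
    using weight_shift[of "map \<alpha> fh" "map \<beta> gh" t] upper by (simp add: o_def)
  ultimately show ?thesis by simp
qed

lemma (in word_cut) compat_term_cut:
  assumes cw: "cut_weight opw q c" and ne: "f \<noteq> [] \<or> g \<noteq> []"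
  shows "compat_term opw q fl (stdw fh) gl (stdw gh) (u, v) = wprod c f g w"
proof -
  interpret cut_weight opw q c by fact
  show ?thesis
  proof (cases "fh = [] \<and> gh = []")
    case True
    then have "fl = f" "gl = g" by (simp_all add: filter_id_conv filter_empty_conv)
    then have "u = w" "v = []" using True by (simp_all add: u_def w_def v_def)
    then show ?thesis
      using True opw_eq_wprod_surjw[OF surj_f surj_g ne] \<open>fl = f\<close> \<open>gl = g\<close>
      by (simp add: compat_term_def tens_def delta_def)
  next
    case False
    have "stdw (map \<alpha> fl) = fl" "stdw (map \<beta> gl) = gl"
      using stdw_map_strict_mono[OF monotone_on_subset[OF mono_\<alpha>]]
        stdw_map_strict_mono[OF monotone_on_subset[OF mono_\<beta>]]
        stdw_surjw[OF surjw_fl] stdw_surjw[OF surjw_gl] by auto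
    then have lower: "star_w q fl gl u = q ^ capw (map \<alpha> fl) (map \<beta> gl)"
      using surjw_u
      by (simp add: star_w_eq_wprod_surjw[OF surjw_fl surjw_gl] wprod_def u_def wt_star_def)
    have upper: "opw q (stdw fh) (stdw gh) v = c (map (\<lambda>z. \<alpha> z - t) fh) (map (\<lambda>z. \<beta> z - t) gh)"
      using False surjw_v opw_eq_wprod_surjw[OF surjw_stdw surjw_stdw, of fh gh]
        stdw_map_strict_mono[OF mono_shift_\<alpha>] stdw_map_strict_mono[OF mono_shift_\<beta>]
      by (simp add: wprod_def v_def)
    have nonunit: "\<not> (stdw fh = [] \<and> stdw gh = [])" using False by simp
    have upper_ne: "fh \<noteq> [] \<or> gh \<noteq> []" using False by blast
    show ?thesis
      unfolding compat_term_def if_not_P[OF nonunit] tens_def wprod_w_cut[OF cw upper_ne]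
      using lower upper by simp
  qed
qed

lemma glue_cut:
  fixes t :: nat
  assumes \<gamma>_def: "\<gamma> = (\<lambda>z. if z \<le> i then \<gamma>1 z else \<gamma>2 z + t)"
    and mono: "strict_mono_on (set (vals_le i x)) \<gamma>1" "strict_mono_on (set (vals_gt i x)) \<gamma>2"
    and bounds: "\<And>z. z \<in> set (vals_le i x) \<Longrightarrow> \<gamma>1 z \<le> t"
      "\<And>z. z \<in> set (vals_gt i x) \<Longrightarrow> 1 \<le> \<gamma>2 z"
  shows "strict_mono_on (set x) \<gamma>" and "\<And>z. z \<in> set x \<Longrightarrow> \<gamma> z \<le> t \<longleftrightarrow> z \<le> i"
    and "map \<gamma> (vals_le i x) = map \<gamma>1 (vals_le i x)"
    and "map (\<lambda>z. \<gamma> z - t) (vals_gt i x) = map \<gamma>2 (vals_gt i x)"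
    and "set (map \<gamma> x) = set (map \<gamma>1 (vals_le i x)) \<union> (\<lambda>y. y + t) ` set (map \<gamma>2 (vals_gt i x))"
proof -
  show "strict_mono_on (set x) \<gamma>"
    unfolding \<gamma>_def
  proof (rule strict_mono_on_glue[where P="\<lambda>z. z \<le> i"])
    show "strict_mono_on {z \<in> set x. z \<le> i} \<gamma>1" "strict_mono_on {z \<in> set x. \<not> z \<le> i} \<gamma>2"
      using mono by (simp_all add: set_filter)
  qed (use bounds in auto)
  show "\<gamma> z \<le> t \<longleftrightarrow> z \<le> i" if "z \<in> set x" for z
    using that bounds[of z] by (auto simp: \<gamma>_def)
  show "map \<gamma> (vals_le i x) = map \<gamma>1 (vals_le i x)"
    "map (\<lambda>z. \<gamma> z - t) (vals_gt i x) = map \<gamma>2 (vals_gt i x)"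
    by (auto simp: \<gamma>_def)
  show "set (map \<gamma> x) = set (map \<gamma>1 (vals_le i x)) \<union> (\<lambda>y. y + t) ` set (map \<gamma>2 (vals_gt i x))"
    by (auto simp: \<gamma>_def image_image)
qed

text \<open>The nonzero terms word_term p (w, t) of the coproducts of the summands w of f o g correspond
  bijectively, via cut_ranks and uncut, to the nonzero terms pair_term p (i, j).\<close>

context cut_weight
begin

context
  fixes f g :: "nat list"
  assumes surj_f: "surjw f" and surj_g: "surjw g" and ne: "f \<noteq> [] \<or> g \<noteq> []"
begin

definition "pair_term p = (\<lambda>(i, j). compat_term opw q (fst (cop_term f i)) (snd (cop_term f i))
  (fst (cop_term g j)) (snd (cop_term g j)) p)"
definition "word_term p = (\<lambda>(w, t). wprod c f g w * (if p = cop_term w t then 1 else 0))"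
definition "cut_ranks = (\<lambda>(w, t). (rank_in (take (length f) w) t, rank_in (drop (length f) w) t))"
definition "uncut p = (\<lambda>(i, j). (recombine f g i j (fst p) (snd p), wmax (fst p)))"

lemma word_term_nonzero_cut:
  assumes wt: "(w, t) \<in> Sigma W (\<lambda>w. {0..wmax w})" and nz: "word_term p (w, t) \<noteq> 0"
  shows "cut_ranks (w, t) \<in> {0..wmax f} \<times> {0..wmax g} \<and> uncut p (cut_ranks (w, t)) = (w, t)
    \<and> pair_term p (cut_ranks (w, t)) = word_term p (w, t)"
proof -
  have wprod_nz: "wprod c f g w \<noteq> 0" and p: "p = cop_term w t"
    using nz by (auto simp: word_term_def split: if_splits)
  note w = wprod_nonzeroD[OF wprod_nz]
  obtain \<alpha> \<beta> where mono: "strict_mono_on (set f) \<alpha>" "strict_mono_on (set g) \<beta>"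
    and w_eq: "w = map \<alpha> f @ map \<beta> g"
    using stdw_halves_imp_map[of f w g] w stdw_surjw[OF surj_f] stdw_surjw[OF surj_g] by metis
  define i where "i = rank_in (map \<alpha> f) t"
  define j where "j = rank_in (map \<beta> g) t"
  interpret W: word_cut f g \<alpha> \<beta> i j t "wmax w"
    using word_cut_ranks[OF surj_f surj_g mono] w w_eq wt by (simp add: i_def j_def)
  have cut: "cut_ranks (w, t) = (i, j)" by (simp add: cut_ranks_def i_def j_def w_eq)
  have p_uv: "p = (W.u, W.v)"
    using p W.corestr_w_lower W.stdw_corestr_w_upper by (simp add: cop_term_def W.w_def w_eq)
  show ?thesis
  proof (intro conjI)
    show "cut_ranks (w, t) \<in> {0..wmax f} \<times> {0..wmax g}" using cut W.i_le W.j_le by simp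
    show "uncut p (cut_ranks (w, t)) = (w, t)"
      using cut p_uv W.recombine_u_v W.wmax_u by (simp add: uncut_def W.w_def w_eq)
    show "pair_term p (cut_ranks (w, t)) = word_term p (w, t)"
      using cut p_uv W.compat_term_cut[OF cut_weight_axioms ne] W.cop_term_f W.cop_term_g p
      by (simp add: pair_term_def word_term_def W.w_def w_eq)
  qed
qed

lemma compat_term_nonzero_shape:
  assumes nz: "compat_term opw q (vals_le i f) (stdw (vals_gt i f)) (vals_le j g)
    (stdw (vals_gt j g)) (u, v) \<noteq> 0"
  shows "surjw u \<and> stdw (take (length (vals_le i f)) u) = stdw (vals_le i f)
      \<and> stdw (drop (length (vals_le i f)) u) = stdw (vals_le j g)" (is ?U)
    and "surjw v \<and> stdw (take (length (vals_gt i f)) v) = stdw (vals_gt i f)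
      \<and> stdw (drop (length (vals_gt i f)) v) = stdw (vals_gt j g)" (is ?V)
proof -
  have surj_lower: "surjw (vals_le i f)" "surjw (vals_le j g)"
    using surj_f surj_g by (simp_all add: surjw_vals_le)
  have "?U \<and> ?V"
  proof (cases "vals_gt i f = [] \<and> vals_gt j g = []")
    case True
    then have "vals_le i f = f" "vals_le j g = g"
      by (simp_all add: filter_id_conv filter_empty_conv)
    moreover have "opw q f g u * delta [] v \<noteq> 0"
      using nz True calculation by (simp add: compat_term_def tens_def)
    then have "wprod c f g u \<noteq> 0" "v = []"
      using opw_eq_wprod_surjw[OF surj_f surj_g ne] by (auto simp: delta_def split: if_splits)
    ultimately show ?thesis
      using True wprod_nonzeroD[of c f g u] stdw_surjw[OF surj_f] stdw_surjw[OF surj_g] by simp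
  next
    case False
    then have nonunit: "\<not> (stdw (vals_gt i f) = [] \<and> stdw (vals_gt j g) = [])" by simp
    have "star_w q (vals_le i f) (vals_le j g) u * opw q (stdw (vals_gt i f))
        (stdw (vals_gt j g)) v \<noteq> 0"
      using nz unfolding compat_term_def if_not_P[OF nonunit] tens_def by simp
    moreover have "star_w q (vals_le i f) (vals_le j g) u
        = wprod (wt_star q) (vals_le i f) (vals_le j g) u"
      by (simp add: star_w_eq_wprod_surjw[OF surj_lower])
    moreover have "opw q (stdw (vals_gt i f)) (stdw (vals_gt j g)) v
        = wprod c (stdw (vals_gt i f)) (stdw (vals_gt j g)) v"
      using False opw_eq_wprod_surjw[OF surjw_stdw surjw_stdw, of "vals_gt i f" "vals_gt j g"]
      by simp
    ultimately have parts: "wprod (wt_star q) (vals_le i f) (vals_le j g) u \<noteq> 0"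
      "wprod c (stdw (vals_gt i f)) (stdw (vals_gt j g)) v \<noteq> 0"
      by (metis mult_zero_left, metis mult_zero_right)
    show ?thesis
      using wprod_nonzeroD[OF parts(1)] wprod_nonzeroD[OF parts(2)] stdw_surjw[OF surj_lower(1)]
        stdw_surjw[OF surj_lower(2)] stdw_surjw[OF surjw_stdw] by (simp only: length_stdw)
  qed
  then show ?U ?V by blast+
qed

lemma compat_term_nonzero_word_cut:
  assumes ij: "i \<le> wmax f" "j \<le> wmax g"
    and nz: "compat_term opw q (vals_le i f) (stdw (vals_gt i f)) (vals_le j g)
      (stdw (vals_gt j g)) (u, v) \<noteq> 0"
  obtains \<alpha> \<beta> where "word_cut f g \<alpha> \<beta> i j (wmax u) (wmax u + wmax v)"
    "u = map \<alpha> (vals_le i f) @ map \<beta> (vals_le j g)"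
    "v = map (\<lambda>z. \<alpha> z - wmax u) (vals_gt i f) @ map (\<lambda>z. \<beta> z - wmax u) (vals_gt j g)"
proof -
  note U = compat_term_nonzero_shape(1)[OF nz] and V = compat_term_nonzero_shape(2)[OF nz]
  define t where "t = wmax u"
  obtain \<alpha>1 \<beta>1 where mono1: "strict_mono_on (set (vals_le i f)) \<alpha>1"
      "strict_mono_on (set (vals_le j g)) \<beta>1"
    and u: "u = map \<alpha>1 (vals_le i f) @ map \<beta>1 (vals_le j g)"
    using U by (elim conjE stdw_halves_imp_map)
  obtain \<alpha>2 \<beta>2 where mono2: "strict_mono_on (set (vals_gt i f)) \<alpha>2"
      "strict_mono_on (set (vals_gt j g)) \<beta>2"
    and v: "v = map \<alpha>2 (vals_gt i f) @ map \<beta>2 (vals_gt j g)"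
    using V by (elim conjE stdw_halves_imp_map)
  have set_u: "set u = {1..t}" and set_v: "set v = {1..wmax v}"
    using U V by (simp_all add: surjw_def t_def)
  have bounds: "\<And>z. z \<in> set (vals_le i f) \<Longrightarrow> \<alpha>1 z \<le> t"
    "\<And>z. z \<in> set (vals_gt i f) \<Longrightarrow> 1 \<le> \<alpha>2 z"
    "\<And>z. z \<in> set (vals_le j g) \<Longrightarrow> \<beta>1 z \<le> t"
    "\<And>z. z \<in> set (vals_gt j g) \<Longrightarrow> 1 \<le> \<beta>2 z"
    using set_u set_v unfolding u v by (simp_all only: set_append set_map) auto
  define \<alpha> where "\<alpha> = (\<lambda>z. if z \<le> i then \<alpha>1 z else \<alpha>2 z + t)"
  define \<beta> where "\<beta> = (\<lambda>z. if z \<le> j then \<beta>1 z else \<beta>2 z + t)"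
  note A = glue_cut[OF \<alpha>_def mono1(1) mono2(1) bounds(1,2)]
  note B = glue_cut[OF \<beta>_def mono1(2) mono2(2) bounds(3,4)]
  have "set (map \<alpha> f @ map \<beta> g) = set u \<union> (\<lambda>y. y + t) ` set v"
    using A(5) B(5) u v by auto
  also have "\<dots> = {1..t + wmax v}"
    unfolding set_u set_v by auto
  finally have "word_cut f g \<alpha> \<beta> i j t (t + wmax v)"
    using surj_f surj_g A(1,2) B(1,2) ij by unfold_locales auto
  then show ?thesis
    using that[of \<alpha> \<beta>] A(3,4) B(3,4) u v by (simp add: t_def)
qed

lemma pair_term_nonzero_uncut:
  assumes ij: "(i, j) \<in> {0..wmax f} \<times> {0..wmax g}" and nz: "pair_term p (i, j) \<noteq> 0"
    and W: "\<And>w. wprod c f g w \<noteq> 0 \<Longrightarrow> w \<in> W"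
  shows "uncut p (i, j) \<in> Sigma W (\<lambda>w. {0..wmax w}) \<and> cut_ranks (uncut p (i, j)) = (i, j)
    \<and> word_term p (uncut p (i, j)) = pair_term p (i, j)"
proof -
  obtain u v where p: "p = (u, v)" by (cases p)
  have cop: "cop_term f i = (vals_le i f, stdw (vals_gt i f))"
    "cop_term g j = (vals_le j g, stdw (vals_gt j g))"
    unfolding cop_term_def corestr_le[OF surj_f] corestr_gt[OF surj_f]
      corestr_le[OF surj_g] corestr_gt[OF surj_g] by simp_all
  then have "compat_term opw q (vals_le i f) (stdw (vals_gt i f)) (vals_le j g)
      (stdw (vals_gt j g)) (u, v) \<noteq> 0"
    using nz by (simp add: pair_term_def p)
  then obtain \<alpha> \<beta> where cut: "word_cut f g \<alpha> \<beta> i j (wmax u) (wmax u + wmax v)"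
    and u: "u = map \<alpha> (vals_le i f) @ map \<beta> (vals_le j g)"
    and v: "v = map (\<lambda>z. \<alpha> z - wmax u) (vals_gt i f) @ map (\<lambda>z. \<beta> z - wmax u) (vals_gt j g)"
    using ij by (auto elim: compat_term_nonzero_word_cut)
  interpret W: word_cut f g \<alpha> \<beta> i j "wmax u" "wmax u + wmax v" by (rule cut)
  have uv: "W.u = u" "W.v = v"
    by (simp_all only: W.u_def W.v_def u[symmetric] v[symmetric])
  then have p_uv: "p = (W.u, W.v)" using p by simp
  have uncut: "uncut p (i, j) = (W.w, wmax u)"
    using p_uv uv W.recombine_u_v by (simp add: uncut_def)
  have pair: "pair_term p (i, j) = wprod c f g W.w"
    using p_uv cop W.compat_term_cut[OF cut_weight_axioms ne] by (simp add: pair_term_def)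
  have "cop_term W.w (wmax u) = (W.u, W.v)"
    using W.corestr_w_lower W.stdw_corestr_w_upper by (simp add: cop_term_def)
  then have word: "word_term p (W.w, wmax u) = wprod c f g W.w"
    using p_uv by (simp add: word_term_def)
  have "W.w \<in> W" using W nz pair by simp
  moreover have "wmax u \<le> wmax W.w" using W.wmax_w by simp
  moreover have "cut_ranks (W.w, wmax u) = (i, j)"
    using W.rank_in_cut by (simp add: cut_ranks_def W.w_def)
  ultimately show ?thesis using uncut pair word by simp
qed

lemma sum_wprod_cop_w:
  assumes fin: "finite W" and W: "\<And>w. wprod c f g w \<noteq> 0 \<Longrightarrow> w \<in> W"
  shows "(\<Sum>w\<in>W. wprod c f g w * cop_w w p) = compat_sum opw q f g p"
proof -
  have "(\<Sum>w\<in>W. wprod c f g w * cop_w w p) = (\<Sum>w\<in>W. \<Sum>t\<in>{0..wmax w}. word_term p (w, t))"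
    by (simp add: cop_w_eq_sum sum_distrib_left word_term_def)
  also have "\<dots> = sum (word_term p) (Sigma W (\<lambda>w. {0..wmax w}))"
    using sum.Sigma[OF fin, of "\<lambda>w. {0..wmax w}" "\<lambda>w t. word_term p (w, t)"] by simp
  also have "\<dots> = sum (pair_term p) ({0..wmax f} \<times> {0..wmax g})"
  proof (rule sum_bij_nonzero[where j=cut_ranks and i="uncut p"])
    show "finite (Sigma W (\<lambda>w. {0..wmax w}))" using fin by auto
  next
    fix a assume "a \<in> Sigma W (\<lambda>w. {0..wmax w})" "word_term p a \<noteq> 0"
    then show "cut_ranks a \<in> {0..wmax f} \<times> {0..wmax g} \<and> uncut p (cut_ranks a) = a
        \<and> pair_term p (cut_ranks a) = word_term p a"
      using word_term_nonzero_cut by (cases a) blast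
  next
    fix b assume "b \<in> {0..wmax f} \<times> {0..wmax g}" "pair_term p b \<noteq> 0"
    then show "uncut p b \<in> Sigma W (\<lambda>w. {0..wmax w}) \<and> cut_ranks (uncut p b) = b
        \<and> word_term p (uncut p b) = pair_term p b"
      using pair_term_nonzero_uncut[OF _ _ W] by (cases b) blast
  qed simp
  also have "\<dots> = compat_sum opw q f g p"
    by (simp add: sum.cartesian_product pair_term_def compat_sum_def)
  finally show ?thesis .
qed

end

end

lemma compat_rhs_eq_sum_cop_support:
  assumes fin: "finite (supp x)" "finite (supp y)"
  shows "compat_rhs q opw x y p = (\<Sum>P1\<in>cop_support x. \<Sum>P2\<in>cop_support y.
    cop x P1 * cop y P2 * compat_term opw q (fst P1) (snd P1) (fst P2) (snd P2) p)"
    (is "_ = (\<Sum>P1\<in>_. \<Sum>P2\<in>_. ?T P1 P2)")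
proof -
  have fin': "finite (cop_support x)" "finite (cop_support y)"
    using fin by (simp_all add: finite_cop_support)
  have "compat_rhs q opw x y p = (\<Sum>P1\<in>supp (cop x). \<Sum>P2\<in>supp (cop y). ?T P1 P2)"
    unfolding compat_rhs_def compat_term_def by (simp add: case_prod_unfold)
  also have "\<dots> = (\<Sum>P1\<in>supp (cop x). \<Sum>P2\<in>cop_support y. ?T P1 P2)"
    by (rule sum.cong[OF refl], rule sum.mono_neutral_left[OF fin'(2) supp_cop])
      (auto simp: supp_def)
  also have "\<dots> = (\<Sum>P1\<in>cop_support x. \<Sum>P2\<in>cop_support y. ?T P1 P2)"
    by (rule sum.mono_neutral_left[OF fin'(1) supp_cop]) (auto simp: supp_def)
  finally show ?thesis .
qed

lemma compat_rhs_eq_sum_compat_sum: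
  assumes fin: "finite (supp x)" "finite (supp y)"
  shows "compat_rhs q opw x y p = (\<Sum>f\<in>supp x. \<Sum>g\<in>supp y. x f * y g * compat_sum opw q f g p)"
proof -
  define T where "T = (\<lambda>P1 P2. compat_term opw q (fst P1) (snd P1) (fst P2) (snd P2) p)"
  have fin': "finite (cop_support x)" "finite (cop_support y)"
    using fin by (simp_all add: finite_cop_support)
  have "compat_rhs q opw x y p = (\<Sum>P1\<in>cop_support x. \<Sum>P2\<in>cop_support y. \<Sum>g\<in>supp y. \<Sum>f\<in>supp x.
      x f * y g * (cop_w f P1 * (cop_w g P2 * T P1 P2)))"
    unfolding compat_rhs_eq_sum_cop_support[OF fin] T_def cop_def sum_distrib_right sum_distrib_left
    by (simp add: mult_ac)
  also have "\<dots> = (\<Sum>P1\<in>cop_support x. \<Sum>g\<in>supp y. \<Sum>f\<in>supp x. \<Sum>P2\<in>cop_support y.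
      x f * y g * (cop_w f P1 * (cop_w g P2 * T P1 P2)))"
    by (rule sum.cong[OF refl], rule sum_commute_3)
  also have "\<dots> = (\<Sum>g\<in>supp y. \<Sum>f\<in>supp x. \<Sum>P1\<in>cop_support x. \<Sum>P2\<in>cop_support y.
      x f * y g * (cop_w f P1 * (cop_w g P2 * T P1 P2)))"
    by (rule sum_commute_3)
  also have "\<dots> = (\<Sum>f\<in>supp x. \<Sum>g\<in>supp y. \<Sum>P1\<in>cop_support x. \<Sum>P2\<in>cop_support y.
      x f * y g * (cop_w f P1 * (cop_w g P2 * T P1 P2)))"
    by (rule sum.swap)
  also have "\<dots> = (\<Sum>f\<in>supp x. \<Sum>g\<in>supp y. x f * y g * compat_sum opw q f g p)"
  proof (intro sum.cong refl)
    fix f g assume f: "f \<in> supp x" and g: "g \<in> supp y"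
    have "(\<Sum>P1\<in>cop_support x. \<Sum>P2\<in>cop_support y. cop_w f P1 * (cop_w g P2 * T P1 P2))
        = (\<Sum>P1\<in>cop_support x. cop_w f P1 * (\<Sum>j\<in>{0..wmax g}. T P1 (cop_term g j)))"
      by (simp add: sum_distrib_left[symmetric] sum_cop_w[OF fin'(2) cop_term_in_cop_support[OF g]])
    also have "\<dots> = compat_sum opw q f g p"
      unfolding compat_sum_def T_def by (rule sum_cop_w[OF fin'(1) cop_term_in_cop_support[OF f]])
    finally show "(\<Sum>P1\<in>cop_support x. \<Sum>P2\<in>cop_support y.
        x f * y g * (cop_w f P1 * (cop_w g P2 * T P1 P2))) = x f * y g * compat_sum opw q f g p"
      by (simp add: sum_distrib_left[symmetric])
  qed
  finally show ?thesis .
qed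

context cut_weight
begin

lemma cop_bil_eq_sum_compat_sum:
  assumes x: "inST x" and y: "inST y"
  shows "cop (bil (opw q) x y) p = (\<Sum>f\<in>supp x. \<Sum>g\<in>supp y. x f * y g * compat_sum opw q f g p)"
proof -
  let ?U = "prod_support x y"
  have "cop (bil (opw q) x y) p = (\<Sum>w\<in>?U. bil (opw q) x y w * cop_w w p)"
    unfolding cop_def
    by (rule sum.mono_neutral_left[OF finite_prod_support[OF x y]
          supp_bil_wprod[OF opw_eq_wprod x y]])
      (auto simp: supp_def)
  also have "\<dots> = (\<Sum>w\<in>?U. \<Sum>f\<in>supp x. \<Sum>g\<in>supp y. x f * y g * (opw q f g w * cop_w w p))"
    unfolding bil_def sum_distrib_right by (simp add: mult_ac)
  also have "\<dots> = (\<Sum>f\<in>supp x. \<Sum>g\<in>supp y. \<Sum>w\<in>?U. x f * y g * (opw q f g w * cop_w w p))"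
    by (rule sum_commute_3)
  also have "\<dots> = (\<Sum>f\<in>supp x. \<Sum>g\<in>supp y. x f * y g * compat_sum opw q f g p)"
  proof (intro sum.cong refl)
    fix f g assume f: "f \<in> supp x" and g: "g \<in> supp y"
    have fg: "surjw f" "surjw g" "f \<noteq> []" "g \<noteq> []"
      using x y f g by (auto simp: inST_def)
    have "(\<Sum>w\<in>?U. opw q f g w * cop_w w p) = (\<Sum>w\<in>?U. wprod c f g w * cop_w w p)"
      using opw_eq_wprod fg by simp
    also have "\<dots> = compat_sum opw q f g p"
      by (rule sum_wprod_cop_w[OF fg(1,2) disjI1[OF fg(3)] finite_prod_support[OF x y]
            wprod_in_prod_support[of c, OF _ f g]])
    finally show "(\<Sum>w\<in>?U. x f * y g * (opw q f g w * cop_w w p))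
        = x f * y g * compat_sum opw q f g p"
      by (simp add: sum_distrib_left[symmetric])
  qed
  finally show ?thesis .
qed

lemma cop_bil:
  assumes "inST x" "inST y"
  shows "cop (bil (opw q) x y) = compat_rhs q opw x y"
proof
  fix p
  show "cop (bil (opw q) x y) p = compat_rhs q opw x y p"
    using assms by (simp add: cop_bil_eq_sum_compat_sum compat_rhs_eq_sum_compat_sum inST_def)
qed

end

theorem mainTheorem8:
  fixes q :: "'k::field"
  shows
    \<comment> \<open>ST(q) is a q-tridendriform algebra\<close>
    "(\<forall>a b c :: nat list \<Rightarrow> 'k. inST a \<and> inST b \<and> inST c \<longrightarrow>
       prec_q q (prec_q q a b) c
         = prec_q q a (vadd (vadd (prec_q q b c) (succ_q q b c)) (smul q (dot_q q b c))) \<and>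
       prec_q q (succ_q q a b) c = succ_q q a (prec_q q b c) \<and>
       succ_q q (vadd (vadd (prec_q q a b) (succ_q q a b)) (smul q (dot_q q a b))) c
         = succ_q q a (succ_q q b c) \<and>
       dot_q q (dot_q q a b) c = dot_q q a (dot_q q b c) \<and>
       dot_q q (succ_q q a b) c = succ_q q a (dot_q q b c) \<and>
       dot_q q (prec_q q a b) c = dot_q q a (succ_q q b c) \<and>
       prec_q q (dot_q q a b) c = dot_q q a (prec_q q b c))
   \<and> \<comment> \<open>Delta(1) = 1 (x) 1\<close>
     (cop (delta [] :: nat list \<Rightarrow> 'k) = tens (delta []) (delta []))
   \<and> \<comment> \<open>counit conditions\<close>
     (\<forall>x :: nat list \<Rightarrow> 'k. inSTp x \<longrightarrow> eps_id (cop x) = x \<and> id_eps (cop x) = x)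
   \<and> \<comment> \<open>compatibility of Delta with the three products\<close>
     (\<forall>x y :: nat list \<Rightarrow> 'k. inST x \<and> inST y \<longrightarrow>
        cop (succ_q q x y) = compat_rhs q succ_w x y \<and>
        cop (dot_q q x y) = compat_rhs q dot_w x y \<and>
        cop (prec_q q x y) = compat_rhs q prec_w x y)"
proof -
  have compatible: "cop (succ_q q x y) = compat_rhs q succ_w x y"
    "cop (dot_q q x y) = compat_rhs q dot_w x y" "cop (prec_q q x y) = compat_rhs q prec_w x y"
    if "inST x" "inST y" for x y :: "nat list \<Rightarrow> 'k"
    unfolding succ_q_def dot_q_def prec_q_def
    by (rule cut_weight.cop_bil[OF cut_weight_succ that] cut_weight.cop_bil[OF cut_weight_dot that]
        cut_weight.cop_bil[OF cut_weight_prec that])+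
  show ?thesis
    by (intro conjI allI impI; (elim conjE)?;
        rule tridendriform_axioms cop_unit cop_counit compatible; assumption)
qed

end
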